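(* Let $f\in\mathrm{AC}^1$. If $n_j$ is an odd sequence then \[ \lim_{j\to\infty} n_j\,\big\|B_{n_j}(f)-f-O(f)/D_{n_j}\big\|_\infty=0, \] and if $n_j$ is an even sequence then \[ \lim_{j\to\infty} n_j\,\big\|B_{n_j}(f)-f-E(f)/D_{n_j}\big\|_\infty=0. \]
   Context: Nodes: $x_{k,n}:=2k/n-1$, $k=0,\dots,n$. $B_n(f,x):=N_n(f,x)/D_n(x)$ for $x$ not a node, $B_n(f,x_{k,n}):=f(x_{k,n})$, where $N_n(f,x)=\sum_{k=0}^n(-1)^k\frac{f(x_{k,n})}{x-x_{k,n}}$ and $D_n(x)=\sum_{k=0}^n(-1)^k\frac{1}{x-x_{k,n}}$. $\mathrm{AC}^1$: functions $f:[-1,1]\to\mathbb{R}$ differentiable at every point of $[-1,1]$ (one-sided at $\pm1$) with $f'$ absolutely continuous. A sequence $n_j$ is a strictly increasing map $\mathbb{N}\to\mathbb{N}$; odd/even if all $n_j$ are odd/even. For $x\in(-1,1)$, $O(f,x):=\frac{f(x)-f(1)}{2(x-1)}-\frac{f(x)-f(-1)}{2(x+1)}$ and $E(f,x):=\frac{f(1)-f(x)}{2(x-1)}+\frac{f(-1)-f(x)}{2(x+1)}$. The sup norm is taken over the points $x\in(-1,1)$ that are not nodes $x_{k,n_j}$ (at the nodes the expressions extend continuously by $0$). *)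

theory Defs
  imports "HOL-Analysis.Analysis"
begin

definition node :: "nat \<Rightarrow> nat \<Rightarrow> real" where
  "node n k = 2 * real k / real n - 1"

definition Nn :: "nat \<Rightarrow> (real \<Rightarrow> real) \<Rightarrow> real \<Rightarrow> real" where
  "Nn n f x = (\<Sum>k=0..n. (-1) ^ k * f (node n k) / (x - node n k))"

definition Dn :: "nat \<Rightarrow> real \<Rightarrow> real" where
  "Dn n x = (\<Sum>k=0..n. (-1) ^ k / (x - node n k))"

definition Bn :: "nat \<Rightarrow> (real \<Rightarrow> real) \<Rightarrow> real \<Rightarrow> real" where
  "Bn n f x = (if (\<exists>k\<le>n. x = node n k) then f x else Nn n f x / Dn n x)"

definition abs_cont_on :: "real set \<Rightarrow> (real \<Rightarrow> real) \<Rightarrow> bool" where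
  "abs_cont_on S g \<longleftrightarrow>
     (\<forall>\<epsilon>>0. \<exists>\<delta>>0. \<forall>(m::nat) (a::nat \<Rightarrow> real) b.
        (\<forall>i<m. a i \<le> b i \<and> {a i..b i} \<subseteq> S) \<longrightarrow>
        (\<forall>i<m. \<forall>j<m. i \<noteq> j \<longrightarrow> b i \<le> a j \<or> b j \<le> a i) \<longrightarrow>
        (\<Sum>i<m. b i - a i) < \<delta> \<longrightarrow>
        (\<Sum>i<m. \<bar>g (b i) - g (a i)\<bar>) < \<epsilon>)"

definition AC1 :: "(real \<Rightarrow> real) \<Rightarrow> bool" where
  "AC1 f \<longleftrightarrow> (\<exists>f'. (\<forall>x\<in>{-1..1}. (f has_real_derivative f' x) (at x within {-1..1}))
                     \<and> abs_cont_on {-1..1} f')"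

definition Ofun :: "(real \<Rightarrow> real) \<Rightarrow> real \<Rightarrow> real" where
  "Ofun f x = (f x - f 1) / (2 * (x - 1)) - (f x - f (-1)) / (2 * (x + 1))"

definition Efun :: "(real \<Rightarrow> real) \<Rightarrow> real \<Rightarrow> real" where
  "Efun f x = (f 1 - f x) / (2 * (x - 1)) + (f (-1) - f x) / (2 * (x + 1))"

definition supnorm :: "nat \<Rightarrow> (real \<Rightarrow> real) \<Rightarrow> ereal" where
  "supnorm n g = (SUP x\<in>{x. -1 < x \<and> x < 1 \<and> (\<forall>k\<le>n. x \<noteq> node n k)}. ereal \<bar>g x\<bar>)"

end

theory Submission
  imports Defs
begin

text \<open>Summation by parts gives, off the nodes, \<open>n \<bar>B\<^sub>n(f,x) - f(x) - G(x)/D\<^sub>n(x)\<bar> \<le> \<bar>T\<^sub>n(x)\<bar>\<close>,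
  where \<open>G\<close> collects the two boundary terms (this is where the parity of \<open>n\<close> enters), the bound
  \<open>\<bar>D\<^sub>n(x)\<bar> \<ge> n/2\<close> is used, and \<open>T\<^sub>n(x)\<close> is the alternating sum of the increments of the
  divided difference \<open>t \<mapsto> (f t - f x)/(t - x)\<close> over the nodes. Each divided difference is an
  average of \<open>f'\<close>, so \<open>T\<^sub>n(x)\<close> is an average of alternating sums of increments of \<open>f'\<close>
  over equally spaced grids of step at most \<open>2/n\<close>. These tend to \<open>0\<close> uniformly because \<open>f'\<close>
  is absolutely continuous: up to a remainder of small variation along all fine grids, \<open>f'\<close> is a
  broken line (obtained from a grid that nearly maximises a discrete Huber energy of \<open>f'\<close>), and
  the alternating sums of a broken line are \<open>O(step)\<close>.\<close>

lemma node_mono: "n > 0 \<Longrightarrow> i \<le> j \<Longrightarrow> node n i \<le> node n j"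
  unfolding node_def by (simp add: divide_right_mono)

lemma node_0 [simp]: "n > 0 \<Longrightarrow> node n 0 = -1"
  by (simp add: node_def)

lemma node_self [simp]: "n > 0 \<Longrightarrow> node n n = 1"
  by (simp add: node_def)

lemma node_bounds: "n > 0 \<Longrightarrow> j \<le> n \<Longrightarrow> -1 \<le> node n j \<and> node n j \<le> 1"
  using node_mono[of n 0 j] node_mono[of n j n] by simp

lemma node_Suc_diff: "n > 0 \<Longrightarrow> node n (Suc j) - node n j = 2 / n"
  unfolding node_def by (simp add: field_simps)

lemma grid_step_less:
  fixes \<eta> :: real
  assumes "\<eta> > 0" "nat \<lceil>2 / \<eta>\<rceil> < N"
  shows "N > 0" "2 / N < \<eta>"
proof -
  have N: "2 / \<eta> < real N" using assms(2) real_nat_ceiling_ge[of "2 / \<eta>"] by linarith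
  show "N > 0" using assms(2) by simp
  then have "\<eta> * (2 / \<eta>) < \<eta> * real N" by (intro mult_strict_left_mono[OF N assms(1)])
  then show "2 / N < \<eta>" using assms(1) \<open>N > 0\<close> by (simp add: divide_less_eq mult.commute)
qed

definition divided_diff :: "(real \<Rightarrow> real) \<Rightarrow> real \<Rightarrow> real \<Rightarrow> real" where
  "divided_diff f x t = (f t - f x) / (t - x)"

lemma Nn_minus_Dn:
  "Nn n f x - f x * Dn n x = - (\<Sum>k\<le>n. (-1) ^ k * divided_diff f x (node n k))"
proof -
  have "(-1) ^ k * f t / (x - t) - f x * ((-1) ^ k / (x - t)) = - ((-1) ^ k * divided_diff f x t)"
    for k and t :: real
  proof -
    have "(-1) ^ k * f t / (x - t) - f x * ((-1) ^ k / (x - t)) = (-1) ^ k * ((f t - f x) / (x - t))"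
      by (simp add: diff_divide_distrib algebra_simps)
    also have "(f t - f x) / (x - t) = - divided_diff f x t"
      unfolding divided_diff_def by (metis divide_minus_right minus_diff_eq)
    finally show ?thesis by simp
  qed
  then have "Nn n f x - f x * Dn n x = (\<Sum>k\<le>n. - ((-1) ^ k * divided_diff f x (node n k)))"
    unfolding Nn_def Dn_def by (simp add: atLeast0AtMost sum_subtractf[symmetric] sum_distrib_left)
  then show ?thesis by (simp add: sum_negf)
qed

lemma alternating_sum_by_parts:
  "2 * (\<Sum>k\<le>n. (-1) ^ k * g k)
     = g 0 + (-1) ^ n * g n - (\<Sum>k<n. (-1) ^ k * (g (Suc k) - g k :: real))"
  by (induction n) (auto simp: algebra_simps)

lemma Ofun_divided_diff:
  "-1 < x \<Longrightarrow> x < 1 \<Longrightarrow> Ofun f x = (divided_diff f x 1 - divided_diff f x (-1)) / 2"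
  unfolding Ofun_def divided_diff_def by (simp add: divide_simps) argo

lemma Efun_divided_diff:
  "-1 < x \<Longrightarrow> x < 1 \<Longrightarrow> Efun f x = - (divided_diff f x 1 + divided_diff f x (-1)) / 2"
  unfolding Efun_def divided_diff_def by (simp add: divide_simps) argo

lemma alternating_reciprocal_sum_bounds:
  fixes e h :: real
  assumes "e > 0" "h > 0"
  shows "1/e - 1/(e + h) \<le> (\<Sum>i\<le>m. (-1) ^ i / (e + i * h))
       \<and> (\<Sum>i\<le>m. (-1) ^ i / (e + i * h)) \<le> 1/e"
  using assms(1)
proof (induction m arbitrary: e)
  case 0
  then show ?case using \<open>h > 0\<close> by simp
next
  case (Suc m)
  have "(\<Sum>i\<le>Suc m. (-1) ^ i / (e + i * h)) = 1/e - (\<Sum>i\<le>m. (-1) ^ i / ((e + h) + i * h))"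
    by (subst sum.atMost_Suc_shift) (simp add: sum_negf algebra_simps)
  moreover obtain "1/(e + h) - 1/(e + h + h) \<le> (\<Sum>i\<le>m. (-1) ^ i / ((e + h) + i * h))"
      and "(\<Sum>i\<le>m. (-1) ^ i / ((e + h) + i * h)) \<le> 1/(e + h)"
    using Suc.IH[of "e + h"] Suc.prems \<open>h > 0\<close> by auto
  moreover have "1/(e + h + h) \<le> 1/(e + h)" "1/(e + h) \<le> 1/e"
    using Suc.prems \<open>h > 0\<close> by (simp_all add: frac_le)
  ultimately show ?case by linarith
qed

lemma Dn_split_at_cell:
  fixes x :: real
  assumes n: "n > 0" and "j < n"
  defines "h \<equiv> 2 / real n" and "d \<equiv> x - node n j" and "e \<equiv> node n (Suc j) - x"
  shows "Dn n x = (-1) ^ j * ((\<Sum>i\<le>j. (-1) ^ i / (d + real i * h))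
    + (\<Sum>i\<le>n - Suc j. (-1) ^ i / (e + real i * h)))"
proof -
  have node_h: "node n k = real k * h - 1" for k by (simp add: node_def h_def)
  have left: "(\<Sum>k\<le>j. (-1) ^ k / (x - node n k)) = (-1) ^ j * (\<Sum>i\<le>j. (-1) ^ i / (d + i * h))"
  proof -
    have "(\<Sum>k\<le>j. (-1) ^ k / (x - node n k)) = (\<Sum>i\<le>j. (-1) ^ (j - i) / (x - node n (j - i)))"
      using sum.nat_diff_reindex[of "\<lambda>k. (-1) ^ k / (x - node n k)" "Suc j"]
      by (simp add: lessThan_Suc_atMost)
    also have "\<dots> = (\<Sum>i\<le>j. (-1) ^ j * ((-1) ^ i / (d + i * h)))"
    proof (rule sum.cong[OF refl])
      fix i assume "i \<in> {..j}"
      then have "(-1::real) ^ (j - i) = (-1) ^ j * (-1) ^ i"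
        by (simp add: power_diff_conv_inverse)
      moreover have "x - node n (j - i) = d + i * h"
        using \<open>i \<in> {..j}\<close> by (simp add: d_def node_h of_nat_diff algebra_simps)
      ultimately show "(-1) ^ (j - i) / (x - node n (j - i)) = (-1) ^ j * ((-1) ^ i / (d + i * h))"
        by simp
    qed
    finally show ?thesis by (simp add: sum_distrib_left)
  qed
  have right: "(\<Sum>i\<le>n - Suc j. (-1) ^ (Suc j + i) / (x - node n (Suc j + i)))
      = (-1) ^ j * (\<Sum>i\<le>n - Suc j. (-1) ^ i / (e + i * h))"
  proof -
    have "(-1) ^ (Suc j + i) / (x - node n (Suc j + i)) = (-1) ^ j * ((-1) ^ i / (e + i * h))" for i
    proof -
      have "x - node n (Suc j + i) = - (e + i * h)" by (simp add: e_def node_h algebra_simps)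
      moreover have "(-1::real) ^ (Suc j + i) = - ((-1) ^ j * (-1) ^ i)" by (simp add: power_add)
      ultimately show ?thesis by (simp only: minus_divide_divide) simp
    qed
    then show ?thesis by (simp add: sum_distrib_left)
  qed
  have "{0..n} = {..j} \<union> (\<lambda>i. Suc j + i) ` {..n - Suc j}"
  proof (intro equalityI subsetI)
    fix k assume "k \<in> {0..n}"
    then show "k \<in> {..j} \<union> (\<lambda>i. Suc j + i) ` {..n - Suc j}"
      by (cases "k \<le> j") (auto simp: image_iff intro!: bexI[of _ "k - Suc j"])
  qed (use \<open>j < n\<close> in auto)
  moreover have "{..j} \<inter> (\<lambda>i. Suc j + i) ` {..n - Suc j} = {}" by auto
  ultimately have "Dn n x = (\<Sum>k\<le>j. (-1) ^ k / (x - node n k))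
      + (\<Sum>i\<le>n - Suc j. (-1) ^ (Suc j + i) / (x - node n (Suc j + i)))"
    unfolding Dn_def by (simp add: sum.union_disjoint sum.reindex inj_on_def)
  then show ?thesis unfolding left right by (simp add: algebra_simps)
qed

text \<open>Both alternating sums in \<open>Dn_split_at_cell\<close> are nonnegative, and the one belonging to
  the endpoint at distance \<open>d \<le> h/2\<close> from \<open>x\<close> is at least \<open>1/d - 1/(d + h) \<ge> 1/h = n/2\<close>.\<close>
lemma abs_Dn_ge:
  assumes n: "n > 0" and x: "-1 < x" "x < 1" and not_node: "\<forall>k\<le>n. x \<noteq> node n k"
  shows "real n / 2 \<le> \<bar>Dn n x\<bar>"
proof -
  define h where "h = 2 / real n"
  have h: "h > 0" using n by (simp add: h_def)
  define j where "j = nat \<lfloor>(x + 1) / h\<rfloor>"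
  have j: "real j = \<lfloor>(x + 1) / h\<rfloor>" using x h by (simp add: j_def)
  have "real j \<le> (x + 1) / h" using j by simp
  then have "node n j \<le> x"
    using h by (simp add: node_def h_def field_simps)
  moreover have x_lt: "x < node n (Suc j)"
    using j h floor_correct[of "(x + 1) / h"] by (simp add: node_def h_def field_simps)
  ultimately have "j < n"
    using node_mono[OF n, of n j] x n by (cases "j < n") auto
  then have "node n j < x"
    using \<open>node n j \<le> x\<close> not_node by (metis le_less less_imp_le_nat)
  define d where "d = x - node n j"
  define e where "e = node n (Suc j) - x"
  have d: "d > 0" and e: "e > 0" and de: "d + e = h"
    using \<open>node n j < x\<close> x_lt node_Suc_diff[OF n, of j] by (auto simp: d_def e_def h_def)
  define S where "S = (\<Sum>i\<le>j. (-1) ^ i / (d + i * h))"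
  define R where "R = (\<Sum>i\<le>n - Suc j. (-1) ^ i / (e + i * h))"
  note S = alternating_reciprocal_sum_bounds[OF d h, of j, folded S_def]
  note R = alternating_reciprocal_sum_bounds[OF e h, of "n - Suc j", folded R_def]
  have "\<bar>Dn n x\<bar> = \<bar>S + R\<bar>"
    using Dn_split_at_cell[OF n \<open>j < n\<close>, of x] by (simp add: S_def R_def d_def e_def h_def abs_mult)
  moreover have "1/(d + h) \<le> 1/d" "1/(e + h) \<le> 1/e" "1/(d + h) \<le> 1/h" "1/(e + h) \<le> 1/h"
    using d e h by (simp_all add: frac_le)
  moreover have "2 * (1/h) \<le> 1/d \<or> 2 * (1/h) \<le> 1/e"
    using d e h de by (cases "d \<le> h/2") (simp_all add: field_simps)
  ultimately have "1/h \<le> \<bar>Dn n x\<bar>"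
    using S R by (elim disjE) linarith+
  then show ?thesis by (simp add: h_def)
qed

definition divdiff_alt_sum :: "(real \<Rightarrow> real) \<Rightarrow> nat \<Rightarrow> real \<Rightarrow> real" where
  "divdiff_alt_sum f n x =
     (\<Sum>k<n. (-1) ^ k * (divided_diff f x (node n (Suc k)) - divided_diff f x (node n k)))"

lemma Bn_error_le:
  assumes n: "n > 0" and x: "-1 < x" "x < 1" and not_node: "\<forall>k\<le>n. x \<noteq> node n k"
    and G: "(odd n \<and> G = Ofun f x) \<or> (even n \<and> G = Efun f x)"
  shows "real n * \<bar>Bn n f x - f x - G / Dn n x\<bar> \<le> \<bar>divdiff_alt_sum f n x\<bar>"
proof -
  have D: "real n / 2 \<le> \<bar>Dn n x\<bar>" by (rule abs_Dn_ge[OF n x not_node])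
  then have "Dn n x \<noteq> 0" using n by auto
  have "G = - (divided_diff f x (-1) + (-1) ^ n * divided_diff f x 1) / 2"
    using G by (auto simp: Ofun_divided_diff[OF x] Efun_divided_diff[OF x])
  then have "Nn n f x - f x * Dn n x - G = divdiff_alt_sum f n x / 2"
    using alternating_sum_by_parts[of "\<lambda>k. divided_diff f x (node n k)" n] n
    unfolding Nn_minus_Dn divdiff_alt_sum_def by simp
  moreover have "Bn n f x = Nn n f x / Dn n x"
    using not_node by (auto simp: Bn_def)
  ultimately have "Bn n f x - f x - G / Dn n x = divdiff_alt_sum f n x / (2 * Dn n x)"
    using \<open>Dn n x \<noteq> 0\<close> by (simp add: field_simps)
  then have "real n * \<bar>Bn n f x - f x - G / Dn n x\<bar>
      = \<bar>divdiff_alt_sum f n x\<bar> * (real n / (2 * \<bar>Dn n x\<bar>))"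
    by (simp add: abs_mult)
  also have "\<dots> \<le> \<bar>divdiff_alt_sum f n x\<bar> * 1"
    using D n by (intro mult_left_mono) auto
  finally show ?thesis by simp
qed

definition ac_modulus :: "(real \<Rightarrow> real) \<Rightarrow> real \<Rightarrow> real \<Rightarrow> bool" where
  "ac_modulus F \<eta> \<epsilon> \<longleftrightarrow> (\<forall>(m::nat) (a::nat \<Rightarrow> real) b.
        (\<forall>i<m. a i \<le> b i \<and> {a i..b i} \<subseteq> {-1..1}) \<longrightarrow>
        (\<forall>i<m. \<forall>j<m. i \<noteq> j \<longrightarrow> b i \<le> a j \<or> b j \<le> a i) \<longrightarrow>
        (\<Sum>i<m. b i - a i) < \<eta> \<longrightarrow>
        (\<Sum>i<m. \<bar>F (b i) - F (a i)\<bar>) < \<epsilon>)"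

lemma abs_cont_on_ac_modulus:
  "abs_cont_on {-1..1} F \<Longrightarrow> \<epsilon> > 0 \<Longrightarrow> \<exists>\<eta>>0. ac_modulus F \<eta> \<epsilon>"
  unfolding abs_cont_on_def ac_modulus_def by blast

lemma ac_modulus_sum_lt:
  assumes "ac_modulus F \<eta> \<epsilon>" "finite I"
    and "\<forall>i\<in>I. -1 \<le> \<alpha> i \<and> \<alpha> i \<le> \<beta> i \<and> \<beta> i \<le> 1"
    and "\<forall>i\<in>I. \<forall>i'\<in>I. i \<noteq> i' \<longrightarrow> \<beta> i \<le> \<alpha> i' \<or> \<beta> i' \<le> \<alpha> i"
    and "(\<Sum>i\<in>I. \<beta> i - \<alpha> i) < \<eta>"
  shows "(\<Sum>i\<in>I. \<bar>F (\<beta> i) - F (\<alpha> i)\<bar>) < \<epsilon>"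
proof -
  obtain h where h: "bij_betw h {..<card I} I"
    using ex_bij_betw_nat_finite[OF assms(2)] by (auto simp: atLeast0LessThan)
  then have hI: "i < card I \<Longrightarrow> h i \<in> I" and h_inj: "inj_on h {..<card I}" for i
    by (auto simp: bij_betw_def)
  have "(\<Sum>i<card I. \<bar>F (\<beta> (h i)) - F (\<alpha> (h i))\<bar>) < \<epsilon>"
    using assms(1) unfolding ac_modulus_def
  proof (elim allE impE)
    show "\<forall>i<card I. \<alpha> (h i) \<le> \<beta> (h i) \<and> {\<alpha> (h i)..\<beta> (h i)} \<subseteq> {-1..1}"
      using hI assms(3) by fastforce
    show "\<forall>i<card I. \<forall>j<card I. i \<noteq> j \<longrightarrow> \<beta> (h i) \<le> \<alpha> (h j) \<or> \<beta> (h j) \<le> \<alpha> (h i)"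
      using hI h_inj assms(4) by (metis inj_onD lessThan_iff)
    show "(\<Sum>i<card I. \<beta> (h i) - \<alpha> (h i)) < \<eta>"
      using assms(5) sum.reindex_bij_betw[OF h, of "\<lambda>i. \<beta> i - \<alpha> i"] by simp
  qed
  then show ?thesis
    using sum.reindex_bij_betw[OF h, of "\<lambda>i. \<bar>F (\<beta> i) - F (\<alpha> i)\<bar>"] by simp
qed

lemma ac_modulus_dist_lt:
  assumes "ac_modulus F \<eta> \<epsilon>" "t \<in> {-1..1}" "t' \<in> {-1..1}" "\<bar>t - t'\<bar> < \<eta>"
  shows "\<bar>F t - F t'\<bar> < \<epsilon>"
proof -
  have "(\<Sum>i\<in>{()}. \<bar>F (max t t') - F (min t t')\<bar>) < \<epsilon>"
    by (rule ac_modulus_sum_lt[OF assms(1)]) (use assms in auto)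
  then show ?thesis by (cases "t \<le> t'") (auto simp: max_def min_def abs_minus_commute)
qed

lemma abs_cont_on_imp_uniformly_continuous_on:
  assumes "abs_cont_on {-1..1} F"
  shows "uniformly_continuous_on {-1..1} F"
  unfolding uniformly_continuous_on_def dist_real_def
proof (intro allI impI)
  fix e :: real assume "e > 0"
  then obtain \<eta> where "\<eta> > 0" "ac_modulus F \<eta> e"
    using abs_cont_on_ac_modulus[OF assms] by blast
  then show "\<exists>d>0. \<forall>x\<in>{-1..1}. \<forall>x'\<in>{-1..1}. \<bar>x' - x\<bar> < d \<longrightarrow> \<bar>F x' - F x\<bar> < e"
    using ac_modulus_dist_lt by blast
qed

definition grid_incr :: "(real \<Rightarrow> real) \<Rightarrow> nat \<Rightarrow> nat \<Rightarrow> real" where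
  "grid_incr F n j = F (node n (Suc j)) - F (node n j)"

lemma node_refine:
  "n > 0 \<Longrightarrow> M > 0 \<Longrightarrow> node (n * M) (i * M + r) = node n i + r * (2 / (n * M))"
  unfolding node_def by (simp add: field_simps)

lemma grid_incr_refine_sum:
  assumes "n > 0" "M > 0"
  shows "(\<Sum>r<M. grid_incr F (n * M) (i * M + r)) = grid_incr F n i"
proof -
  have "(\<Sum>r<M. grid_incr F (n * M) (i * M + r))
      = F (node (n * M) (i * M + M)) - F (node (n * M) (i * M + 0))"
    using sum_lessThan_telescope[of "\<lambda>r. F (node (n * M) (i * M + r))" M]
    by (simp add: grid_incr_def)
  also have "\<dots> = grid_incr F n i"
    using node_refine[OF assms, of "Suc i" 0] node_refine[OF assms, of i 0]
    by (simp add: grid_incr_def add.commute)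
  finally show ?thesis .
qed

lemma sum_refine:
  fixes n M :: nat
  shows "(\<Sum>j<n * M. g j) = (\<Sum>i<n. \<Sum>r<M. g (i * M + r))"
  by (subst sum_mult_product) (simp add: add.commute)

lemma node_cells_disjoint:
  "n > 0 \<Longrightarrow> i \<noteq> i' \<Longrightarrow> node n (Suc i) \<le> node n i' \<or> node n (Suc i') \<le> node n i"
  by (cases "i < i'") (auto intro: node_mono)

lemma ac_modulus_refined_sum:
  assumes ac: "ac_modulus F \<eta> \<epsilon>" and n: "n > 0" and M: "M > 0"
    and H: "H \<subseteq> {..<n}" "real (card H) * (2 / n) < \<eta>"
  shows "(\<Sum>i\<in>H. \<Sum>r<M. \<bar>grid_incr F (n * M) (i * M + r)\<bar>) < \<epsilon>"
proof -
  have fin: "finite H" using H(1) finite_subset by blast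
  define N where "N = n * M"
  have N: "N > 0" using n M by (simp add: N_def)
  let ?j = "\<lambda>p::nat \<times> nat. fst p * M + snd p"
  have j_lt: "?j p < N" if "p \<in> H \<times> {..<M}" for p
  proof -
    have "fst p < n" "snd p < M" using that H(1) by auto
    then have "fst p * M + snd p < Suc (fst p) * M" by simp
    also have "\<dots> \<le> N" using \<open>fst p < n\<close> by (simp add: N_def del: mult_Suc)
    finally show ?thesis .
  qed
  have j_inj: "?j p \<noteq> ?j q" if "p \<in> H \<times> {..<M}" "q \<in> H \<times> {..<M}" "p \<noteq> q" for p q
  proof
    assume "?j p = ?j q"
    moreover have "?j p div M = fst p" "?j q div M = fst q" "?j p mod M = snd p" "?j q mod M = snd q"
      using that by auto
    ultimately show False using that(3) by (metis prod.expand)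
  qed
  have "(\<Sum>p\<in>H \<times> {..<M}. \<bar>F (node N (Suc (?j p))) - F (node N (?j p))\<bar>) < \<epsilon>"
  proof (rule ac_modulus_sum_lt[OF ac])
    show "finite (H \<times> {..<M})" using fin by simp
    show "\<forall>p\<in>H \<times> {..<M}. -1 \<le> node N (?j p) \<and> node N (?j p) \<le> node N (Suc (?j p))
        \<and> node N (Suc (?j p)) \<le> 1"
    proof
      fix p assume "p \<in> H \<times> {..<M}"
      then have "Suc (?j p) \<le> N" using j_lt by (simp add: Suc_le_eq)
      then show "-1 \<le> node N (?j p) \<and> node N (?j p) \<le> node N (Suc (?j p)) \<and> node N (Suc (?j p)) \<le> 1"
        using node_bounds[OF N, of "?j p"] node_bounds[OF N, of "Suc (?j p)"] node_mono[OF N, of "?j p" "Suc (?j p)"]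
        by simp
    qed
    show "\<forall>p\<in>H \<times> {..<M}. \<forall>q\<in>H \<times> {..<M}. p \<noteq> q \<longrightarrow>
        node N (Suc (?j p)) \<le> node N (?j q) \<or> node N (Suc (?j q)) \<le> node N (?j p)"
      using j_inj node_cells_disjoint[OF N] by blast
    have "(\<Sum>p\<in>H \<times> {..<M}. node N (Suc (?j p)) - node N (?j p)) = real (card H) * (2 / n)"
      using node_Suc_diff[OF N] M by (simp add: card_cartesian_product N_def)
    then show "(\<Sum>p\<in>H \<times> {..<M}. node N (Suc (?j p)) - node N (?j p)) < \<eta>"
      using H(2) by simp
  qed
  then show ?thesis
    by (simp add: sum.cartesian_product grid_incr_def N_def case_prod_unfold)
qed

lemma ac_modulus_grid_sum:
  assumes "ac_modulus F \<eta> \<epsilon>" "n > 0" "H \<subseteq> {..<n}" "real (card H) * (2 / n) < \<eta>"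
  shows "(\<Sum>j\<in>H. \<bar>grid_incr F n j\<bar>) < \<epsilon>"
  using ac_modulus_refined_sum[OF assms(1,2) _ assms(3,4), of 1] by simp

text \<open>Few cells can carry an increment exceeding \<open>K\<close> times their length: any \<open>\<eta>/2\<close>
  worth of them would already carry a total increment \<open>\<ge> K \<eta> / 2 \<ge> \<epsilon>\<close>.\<close>
lemma steep_cells_short:
  assumes ac: "ac_modulus F \<eta> \<epsilon>" and n: "n > 0" "2 / n \<le> \<eta> / 2"
    and K: "K > 0" "2 * \<epsilon> \<le> K * \<eta>"
    and H: "H \<subseteq> {j. j < n \<and> K * (2 / n) < \<bar>grid_incr F n j\<bar>}"
  shows "real (card H) * (2 / n) < \<eta>"
proof (rule ccontr)
  assume long: "\<not> real (card H) * (2 / n) < \<eta>"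
  define l where "l = 2 / real n"
  have l: "l > 0" using n by (simp add: l_def)
  have \<eta>: "\<eta> > 0" using n(2) l unfolding l_def by linarith
  define c where "c = nat \<lceil>\<eta> / (2 * l)\<rceil>"
  have c_ge: "\<eta> / (2 * l) \<le> real c" unfolding c_def by linarith
  have "real c = \<lceil>\<eta> / (2 * l)\<rceil>" using \<eta> l unfolding c_def by simp
  then have "real c < \<eta> / (2 * l) + 1" using ceiling_correct[of "\<eta> / (2 * l)"] by linarith
  then have "real c * l < \<eta>"
    using n(2) l by (simp add: l_def field_simps)
  have "\<eta> / (2 * l) \<le> real (card H)"
    using long l \<eta> by (simp add: l_def field_simps)
  then have "c \<le> card H" unfolding c_def by (simp add: nat_le_iff ceiling_le_iff)
  then obtain H' where H': "H' \<subseteq> H" "card H' = c" by (metis obtain_subset_with_card_n)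
  have "(\<Sum>j\<in>H'. \<bar>grid_incr F n j\<bar>) < \<epsilon>"
    using H' H \<open>real c * l < \<eta>\<close>
    by (intro ac_modulus_grid_sum[OF ac n(1)]) (auto simp: l_def)
  moreover have "real c * (K * l) \<le> (\<Sum>j\<in>H'. \<bar>grid_incr F n j\<bar>)"
    using sum_mono[of H' "\<lambda>_. K * l" "\<lambda>j. \<bar>grid_incr F n j\<bar>"] H' H by (force simp: l_def)
  moreover have "K * \<eta> / 2 \<le> real c * (K * l)"
    using mult_right_mono[OF c_ge, of "K * l"] K l by (simp add: field_simps)
  ultimately show False using K by linarith
qed

text \<open>\<open>huber K\<close> is the supremum of the tangent lines \<open>y \<mapsto> 2 t y - t\<^sup>2\<close>, \<open>\<bar>t\<bar> \<le> K\<close>;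
  this makes its Bregman divergence nonnegative.\<close>
definition huber :: "real \<Rightarrow> real \<Rightarrow> real" where
  "huber K y = (if \<bar>y\<bar> \<le> K then y\<^sup>2 else 2 * K * \<bar>y\<bar> - K\<^sup>2)"

definition huber_deriv :: "real \<Rightarrow> real \<Rightarrow> real" where
  "huber_deriv K s = 2 * max (-K) (min K s)"

definition huber_bregman :: "real \<Rightarrow> real \<Rightarrow> real \<Rightarrow> real" where
  "huber_bregman K y s = huber K y - huber K s - huber_deriv K s * (y - s)"

lemma huber_tangent_le:
  assumes "\<bar>t\<bar> \<le> K"
  shows "2 * t * y - t\<^sup>2 \<le> huber K y"
proof (cases "\<bar>y\<bar> \<le> K")
  case True
  have "0 \<le> (y - t)\<^sup>2" by simp
  then show ?thesis using True by (simp add: huber_def power2_eq_square algebra_simps)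
next
  case False
  have "t * y \<le> \<bar>t\<bar> * \<bar>y\<bar>"
    using abs_ge_self[of "t * y"] by (simp add: abs_mult)
  moreover have "0 \<le> (K - \<bar>t\<bar>)\<^sup>2 + 2 * (K - \<bar>t\<bar>) * (\<bar>y\<bar> - K)"
    using assms False by simp
  ultimately show ?thesis
    using False by (simp add: huber_def power2_eq_square algebra_simps)
qed

lemma huber_tangent_eq:
  fixes K s y :: real
  assumes "K \<ge> 0"
  defines "c \<equiv> max (-K) (min K s)"
  shows "huber K s + huber_deriv K s * (y - s) = 2 * c * y - c\<^sup>2"
proof -
  consider "\<bar>s\<bar> \<le> K" | "s > K" | "s < -K" by linarith
  then show ?thesis
    by cases (use assms in \<open>auto simp: huber_def huber_deriv_def power2_eq_square algebra_simps\<close>)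
qed

lemma huber_bregman_nonneg:
  assumes "K \<ge> 0"
  shows "0 \<le> huber_bregman K y s"
proof -
  have "\<bar>max (-K) (min K s)\<bar> \<le> K" using assms by (simp add: abs_le_iff)
  then show ?thesis
    using huber_tangent_le[of "max (-K) (min K s)" K y] huber_tangent_eq[OF assms, of s y]
    by (simp add: huber_bregman_def)
qed

lemma huber_le_sq: "\<bar>y\<bar> \<le> K \<Longrightarrow> huber K y \<le> K\<^sup>2"
  by (simp add: huber_def) (metis abs_ge_zero power2_abs power_mono)

lemma huber_le_abs:
  assumes "K > 0"
  shows "huber K y \<le> 2 * K * \<bar>y\<bar>"
proof (cases "\<bar>y\<bar> \<le> K")
  case True
  have "y\<^sup>2 = \<bar>y\<bar> * \<bar>y\<bar>" by (simp add: power2_eq_square)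
  also have "\<dots> \<le> K * \<bar>y\<bar>" using True by (intro mult_right_mono) auto
  also have "\<dots> \<le> 2 * K * \<bar>y\<bar>" using assms by simp
  finally show ?thesis using True by (simp add: huber_def)
qed (simp add: huber_def)

lemma abs_diff_le_huber_bregman:
  assumes K: "K > 0" and t: "\<tau> > 0" and s: "\<bar>s\<bar> \<le> K/2"
  shows "\<bar>y - s\<bar> \<le> \<tau>/2 + huber_bregman K y s / (2*\<tau>) + 6 * huber_bregman K y s / K"
proof -
  have D0: "huber_bregman K y s \<ge> 0" using K by (simp add: huber_bregman_nonneg)
  have sK: "\<bar>s\<bar> \<le> K" using s K by simp
  have "max (-K) (min K s) = s" using sK by auto
  then have "huber K s + huber_deriv K s * (y - s) = 2 * s * y - s\<^sup>2"
    using huber_tangent_eq[of K s y] K by simp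
  then have e: "huber_bregman K y s = huber K y - 2 * s * y + s\<^sup>2"
    unfolding huber_bregman_def by linarith
  have A: "0 \<le> \<tau>/2 + huber_bregman K y s / (2*\<tau>)" using D0 t by simp
  have B: "0 \<le> 6 * huber_bregman K y s / K" using D0 K by simp
  consider "\<bar>y\<bar> \<le> K" | "y > K" | "y < -K" by linarith
  then show ?thesis
  proof cases
    case 1
    then have D: "huber_bregman K y s = (y - s)\<^sup>2" using e by (simp add: huber_def power2_eq_square algebra_simps)
    have "(\<bar>y - s\<bar> - \<tau>)\<^sup>2 \<ge> 0" by simp
    then have "2*\<tau>*\<bar>y - s\<bar> \<le> \<tau>\<^sup>2 + (y-s)\<^sup>2" by (simp add: power2_eq_square algebra_simps)
    then have "\<bar>y - s\<bar> \<le> \<tau>/2 + (y-s)\<^sup>2 / (2*\<tau>)" using t by (simp add: field_simps power2_eq_square)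
    moreover have "huber_bregman K y s / (2*\<tau>) = (y-s)\<^sup>2 / (2*\<tau>)" using D by simp
    ultimately show ?thesis using B by linarith
  next
    case 2
    then have "\<bar>y\<bar> = y" "\<not> \<bar>y\<bar> \<le> K" using K by auto
    then have D: "huber_bregman K y s = (K-s)\<^sup>2 + 2*(K-s)*(y-K)" using e by (simp add: huber_def power2_eq_square algebra_simps)
    have "K - s \<ge> K/2" using s by simp
    then have "(K-s)\<^sup>2 \<ge> (K/2)\<^sup>2" using K by (intro power_mono) auto
    moreover have "2*(K-s)*(y-K) \<ge> 2*(K/2)*(y-K)" using \<open>K - s \<ge> K/2\<close> 2 by (intro mult_right_mono) auto
    ultimately have "huber_bregman K y s \<ge> K\<^sup>2/4 + K*(y-K)" using D by (simp add: power2_eq_square)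
    then have "6 * huber_bregman K y s / K \<ge> 6 * (K\<^sup>2/4 + K*(y-K)) / K" using K by (simp add: divide_right_mono)
    also have "6 * (K\<^sup>2/4 + K*(y-K)) / K = 3*K/2 + 6*(y-K)" using K by (simp add: field_simps power2_eq_square)
    finally have "6 * huber_bregman K y s / K \<ge> \<bar>y - s\<bar>" using 2 s K by (simp add: abs_le_iff)
    then show ?thesis using A by linarith
  next
    case 3
    then have "\<bar>y\<bar> = -y" "\<not> \<bar>y\<bar> \<le> K" using K by auto
    then have D: "huber_bregman K y s = (K+s)\<^sup>2 + 2*(K+s)*(-y-K)" using e by (simp add: huber_def power2_eq_square algebra_simps)
    have "K + s \<ge> K/2" using s by simp
    then have "(K+s)\<^sup>2 \<ge> (K/2)\<^sup>2" using K by (intro power_mono) auto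
    moreover have "2*(K+s)*(-y-K) \<ge> 2*(K/2)*(-y-K)" using \<open>K + s \<ge> K/2\<close> 3 by (intro mult_right_mono) auto
    ultimately have "huber_bregman K y s \<ge> K\<^sup>2/4 + K*(-y-K)" using D by (simp add: power2_eq_square)
    then have "6 * huber_bregman K y s / K \<ge> 6 * (K\<^sup>2/4 + K*(-y-K)) / K" using K by (simp add: divide_right_mono)
    also have "6 * (K\<^sup>2/4 + K*(-y-K)) / K = 3*K/2 + 6*(-y-K)" using K by (simp add: field_simps power2_eq_square)
    finally have "6 * huber_bregman K y s / K \<ge> \<bar>y - s\<bar>" using 3 s K by (simp add: abs_le_iff)
    then show ?thesis using A by linarith
  qed
qed

lemma abs_scaled_diff_le_huber_bregman:
  assumes K: "K > 0" and \<tau>: "\<tau> > 0" and l: "l > 0" and s: "\<bar>s\<bar> \<le> K/2"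
  shows "\<bar>x - s * l\<bar> \<le> l * (\<tau>/2) + (1/(2*\<tau>) + 6/K) * (l * huber_bregman K (x / l) s)"
proof -
  have "\<bar>x - s * l\<bar> = l * \<bar>x / l - s\<bar>"
    using l by (simp add: abs_mult[symmetric] field_simps)
  also have "\<dots> \<le> l * (\<tau>/2 + huber_bregman K (x / l) s / (2*\<tau>) + 6 * huber_bregman K (x / l) s / K)"
    using abs_diff_le_huber_bregman[OF K \<tau> s, of "x / l"] l by (intro mult_left_mono) auto
  finally show ?thesis by (simp add: algebra_simps)
qed

definition huber_energy :: "real \<Rightarrow> nat \<Rightarrow> (real \<Rightarrow> real) \<Rightarrow> real" where
  "huber_energy K N F = (\<Sum>j<N. (2/N) * huber K (grid_incr F N j / (2/N)))"

lemma sum_lessThan_if_mem: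
  assumes "H \<subseteq> {..<(N::nat)}"
  shows "(\<Sum>j<N. (if j \<in> H then g j else 0)) = (\<Sum>j\<in>H. g j :: real)"
proof -
  have "(\<Sum>j<N. (if j \<in> H then g j else 0)) = sum g ({..<N} \<inter> H)"
    by (simp add: sum.inter_restrict)
  also have "{..<N} \<inter> H = H" using assms by auto
  finally show ?thesis .
qed

lemma huber_energy_le:
  assumes ac: "ac_modulus F \<eta> \<epsilon>" and pos: "\<eta> > 0" "K > 0" and K\<eta>: "K * \<eta> \<ge> 2*\<epsilon>"
    and N: "N > 0" "2/N \<le> \<eta>/2"
  shows "huber_energy K N F \<le> 2*K\<^sup>2 + 2*K*\<epsilon>"
proof -
  define l where "l = 2 / real N"
  have l: "l > 0" using N by (simp add: l_def)
  define H where "H = {j. j < N \<and> \<bar>grid_incr F N j\<bar> > K * (2/N)}"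
  have HN: "H \<subseteq> {..<N}" by (auto simp: H_def)
  have cH: "real (card H) * (2/N) < \<eta>"
    by (rule steep_cells_short[OF ac N(1) N(2) pos(2) K\<eta>]) (simp add: H_def)
  have sH: "(\<Sum>j\<in>H. \<bar>grid_incr F N j\<bar>) < \<epsilon>" by (rule ac_modulus_grid_sum[OF ac N(1) HN cH])
  have pw: "l * huber K (grid_incr F N j / l) \<le> l * K\<^sup>2 + (if j \<in> H then 2*K*\<bar>grid_incr F N j\<bar> else 0)" if "j < N" for j
  proof (cases "j \<in> H")
    case True
    have "l * huber K (grid_incr F N j / l) \<le> l * (2*K*\<bar>grid_incr F N j / l\<bar>)"
      by (rule mult_left_mono[OF huber_le_abs[OF pos(2)]]) (use l in simp)
    also have "\<dots> = 2*K*\<bar>grid_incr F N j\<bar>" using l by (simp add: abs_div)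
    finally show ?thesis using True l by (simp add: add_increasing)
  next
    case False
    then have "\<bar>grid_incr F N j / l\<bar> \<le> K" using that l by (auto simp: H_def l_def abs_div abs_mult field_simps)
    then have "l * huber K (grid_incr F N j / l) \<le> l * K\<^sup>2" using huber_le_sq l by (intro mult_left_mono) auto
    then show ?thesis using False by simp
  qed
  have "huber_energy K N F = (\<Sum>j<N. l * huber K (grid_incr F N j / l))" by (simp add: huber_energy_def l_def)
  also have "\<dots> \<le> (\<Sum>j<N. l * K\<^sup>2 + (if j \<in> H then 2*K*\<bar>grid_incr F N j\<bar> else 0))"
    by (rule sum_mono) (use pw in auto)
  also have "\<dots> = real N * l * K\<^sup>2 + (\<Sum>j\<in>H. 2*K*\<bar>grid_incr F N j\<bar>)"
    by (simp add: sum.distrib sum_lessThan_if_mem[OF HN])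
  also have "real N * l = 2" using N by (simp add: l_def)
  also have "(\<Sum>j\<in>H. 2*K*\<bar>grid_incr F N j\<bar>) = 2*K*(\<Sum>j\<in>H. \<bar>grid_incr F N j\<bar>)" by (simp add: sum_distrib_left)
  also have "2*K*(\<Sum>j\<in>H. \<bar>grid_incr F N j\<bar>) \<le> 2*K*\<epsilon>" using sH pos by simp
  finally show ?thesis by simp
qed

lemma huber_energy_refine:
  assumes N0: "N0 > 0" and M: "M > 0"
  shows "huber_energy K (N0*M) F - huber_energy K N0 F =
    (\<Sum>i<N0. \<Sum>r<M. (2/(N0*M)) * huber_bregman K (grid_incr F (N0*M) (i*M+r) / (2/(N0*M))) (grid_incr F N0 i / (2/N0)))"
proof -
  define l where "l = 2 / real N0"
  define lm where "lm = 2 / real (N0*M)"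
  have l: "l > 0" using N0 by (simp add: l_def)
  have lam: "lm > 0" using N0 M by (simp add: lm_def)
  have Ml: "real M * lm = l" using M by (simp add: lm_def l_def)
  have per: "(\<Sum>r<M. lm * huber_bregman K (grid_incr F (N0*M) (i*M+r) / lm) (grid_incr F N0 i / l))
      = (\<Sum>r<M. lm * huber K (grid_incr F (N0*M) (i*M+r) / lm)) - l * huber K (grid_incr F N0 i / l)" for i
  proof -
    let ?s = "grid_incr F N0 i / l"
    have "(\<Sum>r<M. lm * huber_bregman K (grid_incr F (N0*M) (i*M+r) / lm) ?s)
       = (\<Sum>r<M. lm * huber K (grid_incr F (N0*M) (i*M+r) / lm) - lm * huber K ?s - huber_deriv K ?s * (grid_incr F (N0*M) (i*M+r) - lm * ?s))"
      using lam by (intro sum.cong) (auto simp: huber_bregman_def algebra_simps)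
    also have "\<dots> = (\<Sum>r<M. lm * huber K (grid_incr F (N0*M) (i*M+r) / lm)) - real M * (lm * huber K ?s)
        - huber_deriv K ?s * ((\<Sum>r<M. grid_incr F (N0*M) (i*M+r)) - real M * (lm * ?s))"
      by (simp add: sum_subtractf sum_distrib_left right_diff_distrib)
    also have "real M * (lm * huber K ?s) = real M * lm * huber K ?s" by simp
    also have "real M * (lm * ?s) = real M * lm * ?s" by simp
    also have "(\<Sum>r<M. grid_incr F (N0*M) (i*M+r)) = grid_incr F N0 i" by (rule grid_incr_refine_sum[OF N0 M])
    also have "real M * lm * ?s = grid_incr F N0 i" using Ml l by simp
    finally show ?thesis using Ml by simp
  qed
  have "huber_energy K (N0*M) F = (\<Sum>i<N0. \<Sum>r<M. lm * huber K (grid_incr F (N0*M) (i*M+r) / lm))"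
    unfolding huber_energy_def lm_def by (rule sum_refine)
  moreover have "huber_energy K N0 F = (\<Sum>i<N0. l * huber K (grid_incr F N0 i / l))" by (simp add: huber_energy_def l_def)
  ultimately have "huber_energy K (N0*M) F - huber_energy K N0 F = (\<Sum>i<N0. (\<Sum>r<M. lm * huber K (grid_incr F (N0*M) (i*M+r) / lm)) - l * huber K (grid_incr F N0 i / l))"
    by (simp add: sum_subtractf)
  also have "\<dots> = (\<Sum>i<N0. \<Sum>r<M. lm * huber_bregman K (grid_incr F (N0*M) (i*M+r) / lm) (grid_incr F N0 i / l))"
    using per by simp
  finally show ?thesis by (simp add: lm_def l_def)
qed

lemma refined_slope_deviation_le:
  assumes ac: "ac_modulus F \<eta> \<epsilon>" and pos: "\<eta> > 0" "K > 0" and K\<eta>: "(K/2) * \<eta> \<ge> 2*\<epsilon>"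
    and N0: "N0 > 0" "2/N0 \<le> \<eta>/2" and M: "M > 0" and \<tau>: "\<tau> > 0"
    and th: "huber_energy K (N0*M) F - huber_energy K N0 F \<le> \<theta>"
  shows "(\<Sum>i<N0. \<Sum>r<M. \<bar>grid_incr F (N0*M) (i*M+r) - (grid_incr F N0 i / (2/N0)) * (2/(N0*M))\<bar>)
     \<le> 2*\<epsilon> + \<tau> + \<theta>/(2*\<tau>) + 6*\<theta>/K"
proof -
  define l where "l = 2 / real N0"
  define lm where "lm = 2 / real (N0*M)"
  have l: "l > 0" using N0 by (simp add: l_def)
  have lam: "lm > 0" using N0 M by (simp add: lm_def)
  have Ml: "real M * lm = l" using M by (simp add: lm_def l_def)
  define s where "s i = grid_incr F N0 i / l" for i
  define x where "x i r = grid_incr F (N0*M) (i*M+r)" for i r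
  define D where "D i r = huber_bregman K (x i r / lm) (s i)" for i r
  have D0: "D i r \<ge> 0" for i r unfolding D_def using pos(2) by (simp add: huber_bregman_nonneg)
  define H where "H = {i. i < N0 \<and> \<bar>grid_incr F N0 i\<bar> > (K/2) * (2/N0)}"
  have HN: "H \<subseteq> {..<N0}" by (auto simp: H_def)
  have cH: "real (card H) * (2/N0) < \<eta>"
    by (rule steep_cells_short[OF ac N0(1) N0(2) _ K\<eta>]) (use pos in \<open>auto simp: H_def\<close>)
  have s1: "(\<Sum>i\<in>H. \<Sum>r<M. \<bar>x i r\<bar>) < \<epsilon>" unfolding x_def by (rule ac_modulus_refined_sum[OF ac N0(1) M HN cH])
  have s2: "(\<Sum>i\<in>H. \<bar>grid_incr F N0 i\<bar>) < \<epsilon>" by (rule ac_modulus_grid_sum[OF ac N0(1) HN cH])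
  define c where "c = 1/(2*\<tau>) + 6/K"
  have c0: "c > 0" using \<tau> pos unfolding c_def by (intro add_pos_pos) auto
  define P where "P i r = (if i \<in> H then \<bar>x i r\<bar> + \<bar>s i\<bar> * lm else 0)" for i r
  have pw: "\<bar>x i r - s i * lm\<bar> \<le> P i r + (lm * (\<tau>/2) + c * (lm * D i r))" if "i < N0" for i r
  proof (cases "i \<in> H")
    case True
    have "0 \<le> lm * (\<tau>/2) + c * (lm * D i r)"
      using lam \<tau> c0 D0[of i r] by simp
    moreover have "\<bar>x i r - s i * lm\<bar> \<le> \<bar>x i r\<bar> + \<bar>s i\<bar> * lm"
      using lam by (simp add: abs_triangle_ineq4[THEN order_trans] abs_mult)
    ultimately show ?thesis using True by (simp add: P_def)
  next
    case False
    then have "\<bar>s i\<bar> \<le> K/2" using that l by (auto simp: H_def s_def l_def abs_div abs_mult field_simps)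
    then show ?thesis
      using abs_scaled_diff_le_huber_bregman[OF pos(2) \<tau> lam, of "s i" "x i r"] False
      by (simp add: P_def D_def c_def)
  qed
  have "(\<Sum>i<N0. \<Sum>r<M. \<bar>x i r - s i * lm\<bar>) \<le>
      (\<Sum>i<N0. \<Sum>r<M. P i r + (lm * (\<tau>/2) + c * (lm * D i r)))"
    by (intro sum_mono) (use pw in auto)
  also have "\<dots> = (\<Sum>i<N0. \<Sum>r<M. P i r) + (\<Sum>i<N0. \<Sum>r<M. lm * (\<tau>/2)) + c * (\<Sum>i<N0. \<Sum>r<M. lm * D i r)"
    by (simp only: sum.distrib sum_distrib_left)
  also have "(\<Sum>i<N0. \<Sum>r<M. P i r) = (\<Sum>i<N0. (if i \<in> H then (\<Sum>r<M. \<bar>x i r\<bar>) + \<bar>s i\<bar> * l else 0))"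
  proof (rule sum.cong[OF refl])
    fix i show "(\<Sum>r<M. P i r) = (if i \<in> H then (\<Sum>r<M. \<bar>x i r\<bar>) + \<bar>s i\<bar> * l else 0)"
      using Ml by (cases "i \<in> H") (auto simp: P_def sum.distrib algebra_simps)
  qed
  also have "\<dots> = (\<Sum>i\<in>H. (\<Sum>r<M. \<bar>x i r\<bar>) + \<bar>s i\<bar> * l)"
    by (rule sum_lessThan_if_mem[OF HN])
  also have "\<dots> = (\<Sum>i\<in>H. \<Sum>r<M. \<bar>x i r\<bar>) + (\<Sum>i\<in>H. \<bar>grid_incr F N0 i\<bar>)"
    using l by (simp add: sum.distrib s_def abs_div)
  also have "(\<Sum>i<N0. \<Sum>r<M. lm * (\<tau>/2)) = \<tau>" using N0 M by (simp add: lm_def)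
  finally have A: "(\<Sum>i<N0. \<Sum>r<M. \<bar>x i r - s i * lm\<bar>) \<le>
     (\<Sum>i\<in>H. \<Sum>r<M. \<bar>x i r\<bar>) + (\<Sum>i\<in>H. \<bar>grid_incr F N0 i\<bar>) + \<tau> + c * (\<Sum>i<N0. \<Sum>r<M. lm * D i r)" .
  have B: "(\<Sum>i<N0. \<Sum>r<M. lm * D i r) \<le> \<theta>"
    using th huber_energy_refine[OF N0(1) M, of K F] by (simp add: D_def x_def s_def lm_def l_def)
  have C: "c * (\<Sum>i<N0. \<Sum>r<M. lm * D i r) \<le> c * \<theta>" using B c0 by (intro mult_left_mono) auto
  have E: "c * \<theta> = \<theta>/(2*\<tau>) + 6*\<theta>/K" by (simp add: c_def algebra_simps)
  have "(\<Sum>i<N0. \<Sum>r<M. \<bar>x i r - s i * lm\<bar>) \<le> 2*\<epsilon> + \<tau> + \<theta>/(2*\<tau>) + 6*\<theta>/K"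
    using A C E s1 s2 by linarith
  then show ?thesis by (simp add: x_def s_def lm_def l_def)
qed

definition clip :: "real \<Rightarrow> real \<Rightarrow> real \<Rightarrow> real" where
  "clip u v t = min (max t u) v"

definition broken_line :: "nat \<Rightarrow> (nat \<Rightarrow> real) \<Rightarrow> real \<Rightarrow> real" where
  "broken_line N0 s t = (\<Sum>i<N0. s i * (clip (node N0 i) (node N0 (Suc i)) t - node N0 i))"

lemma clip_eq_right: "v \<le> t \<Longrightarrow> u \<le> v \<Longrightarrow> clip u v t = v" by (simp add: clip_def)
lemma clip_eq_left: "t \<le> u \<Longrightarrow> u \<le> v \<Longrightarrow> clip u v t = u" by (simp add: clip_def)
lemma clip_eq_self: "u \<le> t \<Longrightarrow> t \<le> v \<Longrightarrow> clip u v t = t" by (simp add: clip_def)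

lemma clip_dist_le: "\<bar>clip u v t - clip u v t'\<bar> \<le> \<bar>t - t'\<bar>"
  unfolding clip_def by (auto simp: min_def max_def abs_if)

lemma broken_line_lipschitz: "\<bar>broken_line N0 s t - broken_line N0 s t'\<bar> \<le> (\<Sum>i<N0. \<bar>s i\<bar>) * \<bar>t - t'\<bar>"
proof -
  have "broken_line N0 s t - broken_line N0 s t' = (\<Sum>i<N0. s i * (clip (node N0 i) (node N0 (Suc i)) t - clip (node N0 i) (node N0 (Suc i)) t'))"
    unfolding broken_line_def by (simp add: sum_subtractf[symmetric] algebra_simps)
  also have "\<bar>\<dots>\<bar> \<le> (\<Sum>i<N0. \<bar>s i * (clip (node N0 i) (node N0 (Suc i)) t - clip (node N0 i) (node N0 (Suc i)) t')\<bar>)"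
    by (rule sum_abs)
  also have "\<dots> \<le> (\<Sum>i<N0. \<bar>s i\<bar> * \<bar>t - t'\<bar>)"
    by (intro sum_mono) (simp add: abs_mult mult_left_mono clip_dist_le)
  finally show ?thesis by (simp add: sum_distrib_right)
qed

lemma broken_line_uniformly_continuous_on: "uniformly_continuous_on S (broken_line n s)"
proof (rule lipschitz_on_uniformly_continuous)
  show "(\<Sum>i<n. \<bar>s i\<bar>)-lipschitz_on S (broken_line n s)"
    using broken_line_lipschitz[of n s] by (intro lipschitz_onI) (auto simp: dist_real_def sum_nonneg)
qed

lemma broken_line_grid_incr:
  assumes N0: "N0 > 0" and M: "M > 0" and j: "j < N0*M"
  shows "grid_incr (broken_line N0 s) (N0*M) j = s (j div M) * (2/(N0*M))"
proof -
  define i0 where "i0 = j div M"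
  define r where "r = j mod M"
  define lm where "lm = 2 / real (N0*M)"
  have jr: "j = i0*M + r" by (simp add: i0_def r_def)
  have r: "r < M" using M by (simp add: r_def)
  have i0: "i0 < N0" using j M by (simp add: i0_def less_mult_imp_div_less)
  have t1: "node (N0*M) j = node N0 i0 + r * lm" using node_refine[OF N0 M] jr by (simp add: lm_def)
  have t2: "node (N0*M) (Suc j) = node N0 i0 + (r+1) * lm" using node_refine[OF N0 M, of i0 "r+1"] jr by (simp add: lm_def)
  have lm: "lm > 0" using N0 M by (simp add: lm_def)
  have up: "node N0 i0 + (r+1) * lm \<le> node N0 (Suc i0)"
  proof -
    have "node N0 (Suc i0) = node N0 i0 + M * lm" using node_Suc_diff[OF N0, of i0] M by (simp add: lm_def)
    moreover have "real (r+1) \<le> real M" using r by simp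
    ultimately show ?thesis using lm by (simp add: mult_right_mono)
  qed
  have d: "clip (node N0 i) (node N0 (Suc i)) (node (N0*M) (Suc j)) - clip (node N0 i) (node N0 (Suc i)) (node (N0*M) j)
        = (if i = i0 then lm else 0)" for i
  proof -
    consider "i < i0" | "i = i0" | "i > i0" by linarith
    then show ?thesis
    proof cases
      case 1
      then have "node N0 (Suc i) \<le> node N0 i0" by (intro node_mono[OF N0]) simp
      moreover have "node N0 i \<le> node N0 (Suc i)" by (intro node_mono[OF N0]) simp
      moreover have "node N0 i0 \<le> node (N0*M) j" "node N0 i0 \<le> node (N0*M) (Suc j)" using t1 t2 lm by auto
      ultimately show ?thesis using 1 by (simp add: clip_eq_right)
    next
      case 2
      have a1: "node N0 i0 \<le> node (N0*M) j" "node (N0*M) j \<le> node N0 (Suc i0)" using t1 t2 lm up by (auto simp: algebra_simps)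
      have a2: "node N0 i0 \<le> node (N0*M) (Suc j)" "node (N0*M) (Suc j) \<le> node N0 (Suc i0)" using t1 t2 lm up by auto
      have "clip (node N0 i) (node N0 (Suc i)) (node (N0*M) (Suc j)) = node (N0*M) (Suc j)"
        using 2 a2 by (simp add: clip_eq_self)
      moreover have "clip (node N0 i) (node N0 (Suc i)) (node (N0*M) j) = node (N0*M) j"
        using 2 a1 by (simp add: clip_eq_self)
      ultimately show ?thesis using 2 t1 t2 by (simp add: algebra_simps)
    next
      case 3
      then have "node N0 (Suc i0) \<le> node N0 i" by (intro node_mono[OF N0]) simp
      moreover have "node N0 i \<le> node N0 (Suc i)" by (intro node_mono[OF N0]) simp
      moreover have "node (N0*M) j \<le> node N0 (Suc i0)" "node (N0*M) (Suc j) \<le> node N0 (Suc i0)" using t1 t2 lm up by (auto simp: algebra_simps)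
      ultimately show ?thesis using 3 by (simp add: clip_eq_left)
    qed
  qed
  have "grid_incr (broken_line N0 s) (N0*M) j =
     (\<Sum>i<N0. s i * (clip (node N0 i) (node N0 (Suc i)) (node (N0*M) (Suc j)) - clip (node N0 i) (node N0 (Suc i)) (node (N0*M) j)))"
    unfolding broken_line_def grid_incr_def by (simp add: sum_subtractf[symmetric] algebra_simps)
  also have "\<dots> = (\<Sum>i<N0. (if i = i0 then s i0 * lm else 0))" by (intro sum.cong) (auto simp: d)
  also have "\<dots> = s i0 * lm" using i0 by simp
  finally show ?thesis by (simp add: i0_def lm_def)
qed

lemma alternating_sum_pairs: "(\<Sum>k<2*P. (-1::real)^k * z k) = (\<Sum>p<P. z (2*p) - z (2*p+1))"
  by (induction P) (auto simp: algebra_simps)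

lemma clip_second_diff_le:
  assumes uv: "u \<le> v" and d: "\<delta> \<ge> 0"
  shows "\<bar>clip u v \<alpha> - 2 * clip u v (\<alpha>+\<delta>) + clip u v (\<alpha>+2*\<delta>)\<bar>
     \<le> (if \<alpha> < u \<and> u < \<alpha>+2*\<delta> then 2*\<delta> else 0) + (if \<alpha> < v \<and> v < \<alpha>+2*\<delta> then 2*\<delta> else 0)"
proof -
  have gen: "\<bar>clip u v \<alpha> - 2 * clip u v (\<alpha>+\<delta>) + clip u v (\<alpha>+2*\<delta>)\<bar> \<le> 2*\<delta>"
  proof -
    have "\<bar>clip u v \<alpha> - clip u v (\<alpha>+\<delta>)\<bar> \<le> \<delta>" using clip_dist_le[of u v \<alpha> "\<alpha>+\<delta>"] d by simp
    moreover have "\<bar>clip u v (\<alpha>+2*\<delta>) - clip u v (\<alpha>+\<delta>)\<bar> \<le> \<delta>" using clip_dist_le[of u v "\<alpha>+2*\<delta>" "\<alpha>+\<delta>"] d by simp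
    ultimately show ?thesis by linarith
  qed
  show ?thesis
  proof (cases "(\<alpha> < u \<and> u < \<alpha>+2*\<delta>) \<or> (\<alpha> < v \<and> v < \<alpha>+2*\<delta>)")
    case True
    then show ?thesis using gen d by auto
  next
    case False
    then consider "\<alpha> + 2*\<delta> \<le> u" | "v \<le> \<alpha>" | "u \<le> \<alpha> \<and> \<alpha> + 2*\<delta> \<le> v" using uv d by linarith
    then have "clip u v \<alpha> - 2 * clip u v (\<alpha>+\<delta>) + clip u v (\<alpha>+2*\<delta>) = 0"
      by cases (use d uv in \<open>auto simp: clip_def min_def max_def\<close>)
    then show ?thesis by simp
  qed
qed

lemma sum_windows_le:
  fixes P :: nat and a w \<delta> :: real
  assumes d: "\<delta> > 0"
  shows "(\<Sum>p<P. if a + 2 * real p * \<delta> < w \<and> w < a + 2 * real p * \<delta> + 2 * \<delta> then 2 * \<delta> else 0) \<le> 2 * \<delta>"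
proof -
  define B where "B = {p. p < P \<and> a + 2 * real p * \<delta> < w \<and> w < a + 2 * real p * \<delta> + 2 * \<delta>}"
  have "\<forall>p\<in>B. \<forall>q\<in>B. p = q"
  proof (intro ballI, rule ccontr)
    fix p q assume "p \<in> B" "q \<in> B" "p \<noteq> q"
    then have "(real p + 1) * (2 * \<delta>) \<le> real q * (2 * \<delta>) \<or> (real q + 1) * (2 * \<delta>) \<le> real p * (2 * \<delta>)"
      using d by (cases "p < q") (auto intro!: mult_right_mono)
    then show False using \<open>p \<in> B\<close> \<open>q \<in> B\<close> by (auto simp: B_def algebra_simps)
  qed
  moreover have "finite B" by (simp add: B_def)
  ultimately have "card B \<le> 1" by (simp add: card_le_Suc0_iff_eq)
  moreover have "B = {p \<in> {..<P}. a + 2 * real p * \<delta> < w \<and> w < a + 2 * real p * \<delta> + 2 * \<delta>}"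
    by (auto simp: B_def)
  ultimately show ?thesis
    using d by (simp add: sum.inter_filter[symmetric])
qed

text \<open>Pairing consecutive terms leaves second differences of the clipped pieces, which vanish
  unless a kink of the broken line lies in the window of the pair; each kink lies in at most
  one window.\<close>
lemma alternating_sum_broken_line_le:
  assumes N0: "N0 > 0" and d: "\<delta> \<ge> 0"
  shows "\<bar>\<Sum>k<m. (-1::real)^k * (broken_line N0 s (a + real (Suc k)*\<delta>) - broken_line N0 s (a + real k*\<delta>))\<bar>
     \<le> 5 * (\<Sum>i<N0. \<bar>s i\<bar>) * \<delta>"
proof (cases "\<delta> = 0")
  case True then show ?thesis by simp
next
  case False
  then have d: "\<delta> > 0" using d by simp
  define C1 where "C1 = (\<Sum>i<N0. \<bar>s i\<bar>)"
  have C1: "C1 \<ge> 0" by (simp add: C1_def sum_nonneg)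
  define z where "z k = broken_line N0 s (a + real (Suc k)*\<delta>) - broken_line N0 s (a + real k*\<delta>)" for k
  define P where "P = m div 2"
  define u where "u i = node N0 i" for i
  define c where "c i t = clip (u i) (u (Suc i)) t" for i t
  have uv: "u i \<le> u (Suc i)" for i unfolding u_def by (rule node_mono[OF N0]) simp
  have zp: "z (2*p) - z (2*p+1) = - (\<Sum>i<N0. s i * (c i (a + 2*real p*\<delta>) - 2 * c i (a + 2*real p*\<delta> + \<delta>) + c i (a + 2*real p*\<delta> + 2*\<delta>)))" for p
  proof -
    have e1: "a + real (Suc (2*p))*\<delta> = a + 2*real p*\<delta> + \<delta>" by (simp add: algebra_simps)
    have e2: "a + real (2*p)*\<delta> = a + 2*real p*\<delta>" by simp
    have e3: "a + real (Suc (2*p+1))*\<delta> = a + 2*real p*\<delta> + 2*\<delta>" by (simp add: algebra_simps)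
    have e4: "a + real (2*p+1)*\<delta> = a + 2*real p*\<delta> + \<delta>" by (simp add: algebra_simps)
    show ?thesis unfolding z_def e1 e2 e3 e4 broken_line_def c_def u_def
      by (simp add: sum_subtractf[symmetric] sum.distrib[symmetric] sum_negf[symmetric] algebra_simps)
  qed
  have pairs: "\<bar>\<Sum>p<P. z (2*p) - z (2*p+1)\<bar> \<le> 4 * C1 * \<delta>"
  proof -
    let ?sd = "\<lambda>i p. c i (a + 2*real p*\<delta>) - 2 * c i (a + 2*real p*\<delta> + \<delta>) + c i (a + 2*real p*\<delta> + 2*\<delta>)"
    have "\<bar>\<Sum>p<P. z (2*p) - z (2*p+1)\<bar> = \<bar>\<Sum>i<N0. s i * (\<Sum>p<P. ?sd i p)\<bar>"
      unfolding zp by (simp add: sum_negf sum_distrib_left sum.swap[of _ "{..<P}"])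
    also have "\<dots> \<le> (\<Sum>i<N0. \<bar>s i\<bar> * \<bar>\<Sum>p<P. ?sd i p\<bar>)" by (rule order_trans[OF sum_abs]) (simp add: abs_mult)
    also have "\<dots> \<le> (\<Sum>i<N0. \<bar>s i\<bar> * (4*\<delta>))"
    proof (intro sum_mono mult_left_mono)
      fix i
      have "\<bar>\<Sum>p<P. ?sd i p\<bar> \<le> (\<Sum>p<P. \<bar>?sd i p\<bar>)" by (rule sum_abs)
      also have "\<dots> \<le> (\<Sum>p<P. (if a + 2*real p*\<delta> < u i \<and> u i < a + 2*real p*\<delta> + 2*\<delta> then 2*\<delta> else 0)
                        + (if a + 2*real p*\<delta> < u (Suc i) \<and> u (Suc i) < a + 2*real p*\<delta> + 2*\<delta> then 2*\<delta> else 0))"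
        by (intro sum_mono) (unfold c_def, rule clip_second_diff_le[OF uv[of i] less_imp_le[OF d]])
      also have "\<dots> \<le> 2*\<delta> + 2*\<delta>" unfolding sum.distrib by (intro add_mono sum_windows_le[OF d])
      finally show "\<bar>\<Sum>p<P. ?sd i p\<bar> \<le> 4*\<delta>" by simp
    qed simp
    also have "\<dots> = 4 * C1 * \<delta>" unfolding C1_def sum_distrib_right[symmetric] by (simp add: algebra_simps)
    finally show ?thesis .
  qed
  have zb: "\<bar>z k\<bar> \<le> C1 * \<delta>" for k
    using broken_line_lipschitz[of N0 s "a + real (Suc k)*\<delta>" "a + real k*\<delta>"] d by (simp add: z_def C1_def algebra_simps)
  have "(\<Sum>k<m. (-1::real)^k * z k) = (\<Sum>p<P. z (2*p) - z (2*p+1)) + (if odd m then z (m-1) else 0)"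
  proof (cases "even m")
    case True
    then have "m = 2*P" by (simp add: P_def)
    then show ?thesis using True alternating_sum_pairs by simp
  next
    case False
    then have m: "m = Suc (2*P)" by (simp add: P_def)
    show ?thesis unfolding m by (simp add: alternating_sum_pairs)
  qed
  moreover have "\<bar>(if odd m then z (m-1) else 0)\<bar> \<le> C1 * \<delta>" using zb C1 d by auto
  ultimately have "\<bar>\<Sum>k<m. (-1::real)^k * z k\<bar> \<le> 4 * C1 * \<delta> + C1 * \<delta>" using pairs by linarith
  then show ?thesis by (simp add: z_def C1_def algebra_simps)
qed

lemma sum_blocks_le:
  fixes r :: "nat \<Rightarrow> real" and p q :: "nat \<Rightarrow> nat" and m N :: nat
  assumes "\<And>k. k < m \<Longrightarrow> q k \<le> N" "\<And>k k'. k < k' \<Longrightarrow> q k \<le> p k'" "\<And>j. 0 \<le> r j"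
  shows "(\<Sum>k<m. \<Sum>j\<in>{p k..<q k}. r j) \<le> (\<Sum>j<N. r j)"
proof -
  have "(\<Sum>k<m. \<Sum>j\<in>{p k..<q k}. r j) = (\<Sum>j\<in>(\<Union>k<m. {p k..<q k}). r j)"
  proof (rule sum.UNION_disjoint[symmetric])
    show "\<forall>k\<in>{..<m}. \<forall>k'\<in>{..<m}. k \<noteq> k' \<longrightarrow> {p k..<q k} \<inter> {p k'..<q k'} = {}"
    proof (intro ballI impI)
      fix k k' :: nat assume "k \<noteq> k'"
      then consider "k < k'" | "k' < k" by linarith
      then show "{p k..<q k} \<inter> {p k'..<q k'} = {}"
        by cases (use assms(2) in \<open>fastforce+\<close>)
    qed
  qed auto
  also have "\<dots> \<le> (\<Sum>j<N. r j)"
  proof (rule sum_mono2)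
    show "(\<Union>k<m. {p k..<q k}) \<subseteq> {..<N}" using assms(1) by fastforce
  qed (use assms(3) in auto)
  finally show ?thesis .
qed

lemma node_bracket:
  assumes N: "N > 0" and t: "-1 \<le> t"
  defines "y \<equiv> (t + 1) * N / 2"
  shows "t \<le> node N (nat \<lceil>y\<rceil>)" "node N (nat \<lceil>y\<rceil>) < t + 2 / N"
    and "node N (nat \<lfloor>y\<rfloor>) \<le> t" "t < node N (nat \<lfloor>y\<rfloor>) + 2 / N"
proof -
  define l where "l = 2 / real N"
  have l: "l > 0" using N by (simp add: l_def)
  have y: "y \<ge> 0" using t N by (simp add: y_def)
  have t_eq: "t = y * l - 1" using N by (simp add: y_def l_def)
  have up: "node N (nat \<lceil>y\<rceil>) = \<lceil>y\<rceil> * l - 1" and down: "node N (nat \<lfloor>y\<rfloor>) = \<lfloor>y\<rfloor> * l - 1"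
    using y by (simp_all add: node_def l_def)
  show "t \<le> node N (nat \<lceil>y\<rceil>)"
    unfolding up t_eq using mult_right_mono[OF le_of_int_ceiling[of y], of l] l by simp
  show "node N (nat \<lceil>y\<rceil>) < t + 2 / N"
    unfolding up t_eq l_def[symmetric]
    using mult_strict_right_mono[of "of_int \<lceil>y\<rceil>" "y + 1" l] ceiling_correct[of y] l
    by (simp add: distrib_right)
  show "node N (nat \<lfloor>y\<rfloor>) \<le> t"
    unfolding down t_eq using mult_right_mono[OF of_int_floor_le[of y], of l] l by simp
  show "t < node N (nat \<lfloor>y\<rfloor>) + 2 / N"
    unfolding down t_eq l_def[symmetric]
    using mult_strict_right_mono[of y "of_int \<lfloor>y\<rfloor> + 1" l] floor_correct[of y] l
    by (simp add: distrib_right)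
qed

text \<open>Each step \<open>[\<alpha>\<^sub>k, \<alpha>\<^sub>k\<^sub>+\<^sub>1]\<close> of the coarse grid contains a block of consecutive cells of the
  fine grid, and differs from it by less than one fine cell at either end.\<close>
lemma grid_variation_le:
  fixes R :: "real \<Rightarrow> real" and a \<delta> \<omega> :: real and m N :: nat
  assumes N: "N > 0" and step: "2 / N < \<delta>" and a: "-1 \<le> a" "a + m * \<delta> \<le> 1"
    and osc: "\<And>t t'. t \<in> {-1..1} \<Longrightarrow> t' \<in> {-1..1} \<Longrightarrow> \<bar>t - t'\<bar> \<le> 2 / N \<Longrightarrow> \<bar>R t - R t'\<bar> \<le> \<omega>"
  shows "(\<Sum>k<m. \<bar>R (a + Suc k * \<delta>) - R (a + k * \<delta>)\<bar>)
     \<le> (\<Sum>j<N. \<bar>grid_incr R N j\<bar>) + 2 * real m * \<omega>"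
proof -
  have "0 < 2 / real N" using N by simp
  then have d: "\<delta> > 0" using step by linarith
  define \<alpha> where "\<alpha> k = a + real k * \<delta>" for k
  define y where "y k = (\<alpha> k + 1) * N / 2" for k :: nat
  define p where "p k = nat \<lceil>y k\<rceil>" for k
  define q where "q k = nat \<lfloor>y (Suc k)\<rfloor>" for k
  have \<alpha>_lo: "-1 \<le> \<alpha> k" for k
    using a(1) d by (simp add: \<alpha>_def add_increasing2)
  have \<alpha>_hi: "\<alpha> k \<le> 1" if "k \<le> m" for k
  proof -
    have "real k * \<delta> \<le> real m * \<delta>" using that d by (intro mult_right_mono) auto
    then show ?thesis using a(2) by (simp add: \<alpha>_def)
  qed
  note p_bracket = node_bracket(1,2)[OF N \<alpha>_lo, folded y_def p_def]
  note q_bracket = node_bracket(3,4)[OF N \<alpha>_lo, of "Suc _", folded y_def q_def]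
  have y_Suc: "y (Suc k) = y k + \<delta> * N / 2" for k
    by (simp add: y_def \<alpha>_def algebra_simps)
  have "\<delta> * N / 2 > 1" using step N by (simp add: field_simps)
  then have pq: "p k \<le> q k" for k
    unfolding p_def q_def y_Suc by (intro nat_mono) (simp add: le_floor_iff, linarith)
  have qN: "q k \<le> N" if "k < m" for k
  proof -
    have "y (Suc k) \<le> N" using \<alpha>_hi[of "Suc k"] that N by (simp add: y_def field_simps)
    then show ?thesis unfolding q_def by linarith
  qed
  have qp: "q k \<le> p k'" if "k < k'" for k k'
  proof -
    have "y (Suc k) \<le> y k'"
      using that d N by (simp add: y_def \<alpha>_def mult_right_mono divide_right_mono)
    then show ?thesis unfolding p_def q_def by (intro nat_mono) linarith
  qed
  have node_in: "node N j \<in> {-1..1}" if "j \<le> N" for j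
    using node_bounds[OF N that] by simp
  have step_le: "\<bar>R (\<alpha> (Suc k)) - R (\<alpha> k)\<bar> \<le> 2 * \<omega> + (\<Sum>j\<in>{p k..<q k}. \<bar>grid_incr R N j\<bar>)"
    if k: "k < m" for k
  proof -
    have "\<bar>R (\<alpha> (Suc k)) - R (node N (q k))\<bar> \<le> \<omega>"
      using osc[of "\<alpha> (Suc k)" "node N (q k)"] \<alpha>_lo \<alpha>_hi[of "Suc k"] k node_in[OF qN[OF k]]
        q_bracket[of k] by simp
    moreover have "\<bar>R (node N (p k)) - R (\<alpha> k)\<bar> \<le> \<omega>"
      using osc[of "node N (p k)" "\<alpha> k"] \<alpha>_lo \<alpha>_hi[of k] k node_in[of "p k"] pq[of k] qN[OF k]
        p_bracket[of k] by simp
    moreover have "(\<Sum>j\<in>{p k..<q k}. grid_incr R N j) = R (node N (q k)) - R (node N (p k))"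
      unfolding grid_incr_def by (rule sum_Suc_diff'[OF pq])
    moreover have "\<bar>\<Sum>j\<in>{p k..<q k}. grid_incr R N j\<bar> \<le> (\<Sum>j\<in>{p k..<q k}. \<bar>grid_incr R N j\<bar>)"
      by (rule sum_abs)
    ultimately show ?thesis by linarith
  qed
  have "(\<Sum>k<m. \<bar>R (\<alpha> (Suc k)) - R (\<alpha> k)\<bar>)
      \<le> (\<Sum>k<m. 2 * \<omega> + (\<Sum>j\<in>{p k..<q k}. \<bar>grid_incr R N j\<bar>))"
    by (intro sum_mono) (use step_le in auto)
  also have "\<dots> \<le> 2 * real m * \<omega> + (\<Sum>j<N. \<bar>grid_incr R N j\<bar>)"
    using sum_blocks_le[of m q N p "\<lambda>j. \<bar>grid_incr R N j\<bar>"] qN qp by (simp add: sum.distrib)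
  finally show ?thesis by (simp add: \<alpha>_def)
qed

lemma grid_variation_le_refined:
  fixes R :: "real \<Rightarrow> real" and a \<delta> c :: real and m n :: nat
  assumes R: "uniformly_continuous_on {-1..1} R" and n: "n > 0" and \<delta>: "\<delta> > 0"
    and a: "-1 \<le> a" "a + m * \<delta> \<le> 1"
    and fine: "\<And>M. M > 0 \<Longrightarrow> (\<Sum>j<n * M. \<bar>grid_incr R (n * M) j\<bar>) \<le> c"
  shows "(\<Sum>k<m. \<bar>R (a + Suc k * \<delta>) - R (a + k * \<delta>)\<bar>) \<le> c"
proof (rule field_le_epsilon)
  fix \<epsilon> :: real assume "\<epsilon> > 0"
  define \<omega> where "\<omega> = \<epsilon> / (2 * m + 1)"
  have \<omega>: "\<omega> > 0" "2 * real m * \<omega> \<le> \<epsilon>"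
    using \<open>\<epsilon> > 0\<close> by (auto simp: \<omega>_def field_simps)
  obtain \<eta> where \<eta>: "\<eta> > 0"
    and osc: "\<And>t t'. t \<in> {-1..1} \<Longrightarrow> t' \<in> {-1..1} \<Longrightarrow> \<bar>t' - t\<bar> < \<eta> \<Longrightarrow> \<bar>R t' - R t\<bar> < \<omega>"
    using R \<omega>(1) unfolding uniformly_continuous_on_def dist_real_def by metis
  define \<rho> where "\<rho> = min \<delta> \<eta>"
  have \<rho>: "\<rho> > 0" using \<delta> \<eta> by (simp add: \<rho>_def)
  define M where "M = nat \<lceil>2 / \<rho>\<rceil> + 1"
  define N where "N = n * M"
  have "M > 0" by (simp add: M_def)
  have "M \<le> N" using n by (simp add: N_def)
  then have "2 / N < \<rho>"
    using grid_step_less(2)[OF \<rho>, of N] by (simp add: M_def)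
  then have step: "2 / N < \<delta>" "2 / N < \<eta>" by (auto simp: \<rho>_def)
  have "(\<Sum>k<m. \<bar>R (a + Suc k * \<delta>) - R (a + k * \<delta>)\<bar>) \<le> (\<Sum>j<N. \<bar>grid_incr R N j\<bar>) + 2 * real m * \<omega>"
  proof (rule grid_variation_le)
    show "\<bar>R t - R t'\<bar> \<le> \<omega>" if "t \<in> {-1..1}" "t' \<in> {-1..1}" "\<bar>t - t'\<bar> \<le> 2 / N" for t t'
      using osc[OF that(2,1)] that(3) step(2) by (simp add: abs_minus_commute)
  qed (use n \<open>M > 0\<close> step a in \<open>auto simp: N_def\<close>)
  also have "\<dots> \<le> c + \<epsilon>"
    using fine[OF \<open>M > 0\<close>] \<omega>(2) unfolding N_def by linarith
  finally show "(\<Sum>k<m. \<bar>R (a + Suc k * \<delta>) - R (a + k * \<delta>)\<bar>) \<le> c + \<epsilon>" .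
qed

text \<open>Among the grids \<open>n \<ge> N\<^sub>1\<close> (whose Huber energies are bounded by absolute continuity)
  pick \<open>n\<close> with energy within \<open>\<theta>\<close> of the supremum. Refining \<open>n\<close> then raises the energy by
  at most \<open>\<theta>\<close>, and the Bregman identity turns this into closeness of the fine slopes
  to the coarse ones, i.e. of \<open>F\<close> to its interpolating broken line.\<close>
lemma ac_broken_line_approx:
  assumes AC: "abs_cont_on {-1..1} F" and e: "e > 0"
  obtains n s where "n > 0"
    "\<And>M. M > 0 \<Longrightarrow> (\<Sum>j<n * M. \<bar>grid_incr (\<lambda>t. F t - broken_line n s t) (n * M) j\<bar>) \<le> e"
proof -
  define \<epsilon> where "\<epsilon> = min (e/5) (1/6)"
  have \<epsilon>: "\<epsilon> > 0" "\<epsilon> \<le> e/5" "\<epsilon> \<le> 1/6" using e by (auto simp: \<epsilon>_def)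
  obtain \<eta> where \<eta>: "\<eta> > 0" "ac_modulus F \<eta> \<epsilon>"
    using abs_cont_on_ac_modulus[OF AC \<epsilon>(1)] by blast
  define K where "K = 4 * \<epsilon> / \<eta> + 1"
  have "0 \<le> 4 * \<epsilon> / \<eta>" using \<epsilon> \<eta> by simp
  then have K: "K \<ge> 1" "2 * \<epsilon> \<le> K * \<eta>" "2 * \<epsilon> \<le> (K / 2) * \<eta>"
    using \<epsilon> \<eta> by (auto simp: K_def field_simps)
  define N1 where "N1 = nat \<lceil>2 / (\<eta> / 2)\<rceil> + 1"
  have N1: "N > 0 \<and> 2 / N \<le> \<eta> / 2" if "N \<ge> N1" for N
    using grid_step_less[of "\<eta> / 2" N] that \<eta>(1) unfolding N1_def by simp
  define E where "E = (\<lambda>N. huber_energy K N F) ` {N1..}"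
  have "huber_energy K N F \<le> 2 * K\<^sup>2 + 2 * K * \<epsilon>" if "N \<ge> N1" for N
    using huber_energy_le[OF \<eta>(2) \<eta>(1) _ K(2)] N1[OF that] K(1) by simp
  then have "bdd_above E" unfolding E_def by (intro bdd_aboveI2) auto
  define \<theta> where "\<theta> = \<epsilon>\<^sup>2"
  have "\<theta> > 0" using \<epsilon> by (simp add: \<theta>_def)
  have "E \<noteq> {}" by (simp add: E_def)
  then obtain x where "x \<in> E" "Sup E - \<theta> < x"
    using less_cSupD[of E "Sup E - \<theta>"] \<open>\<theta> > 0\<close> by auto
  then obtain n where n: "n \<ge> N1" "Sup E - \<theta> < huber_energy K n F"
    unfolding E_def by auto
  have n_pos: "n > 0" "2 / n \<le> \<eta> / 2" using N1[OF n(1)] by auto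
  have refine: "huber_energy K (n * M) F - huber_energy K n F \<le> \<theta>" if "M > 0" for M
  proof -
    have "n \<le> n * M" using that by simp
    then have "N1 \<le> n * M" using n(1) by linarith
    then have "huber_energy K (n * M) F \<in> E" unfolding E_def by (intro image_eqI[OF refl]) simp
    then have "huber_energy K (n * M) F \<le> Sup E"
      using \<open>bdd_above E\<close> by (rule cSup_upper)
    then show ?thesis using n(2) by linarith
  qed
  define s where "s i = grid_incr F n i / (2 / n)" for i
  show thesis
  proof (rule that[OF n_pos(1)])
    fix M :: nat assume M: "M > 0"
    have "(\<Sum>j<n * M. \<bar>grid_incr (\<lambda>t. F t - broken_line n s t) (n * M) j\<bar>)
        = (\<Sum>i<n. \<Sum>r<M. \<bar>grid_incr F (n * M) (i * M + r) - (grid_incr F n i / (2 / n)) * (2 / (n * M))\<bar>)"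
    proof -
      have "grid_incr (\<lambda>t. F t - broken_line n s t) (n * M) (i * M + r)
          = grid_incr F (n * M) (i * M + r) - (grid_incr F n i / (2 / n)) * (2 / (n * M))"
        if "i < n" "r < M" for i r
      proof -
        have "i * M + r < Suc i * M" using that by simp
        also have "\<dots> \<le> n * M" using that by (intro mult_right_mono) auto
        finally have "grid_incr (broken_line n s) (n * M) (i * M + r) = s i * (2 / (n * M))"
          using broken_line_grid_incr[OF n_pos(1) M] that by simp
        then show ?thesis by (simp add: grid_incr_def s_def)
      qed
      then show ?thesis unfolding sum_refine by simp
    qed
    also have "\<dots> \<le> 2 * \<epsilon> + \<epsilon> + \<theta> / (2 * \<epsilon>) + 6 * \<theta> / K"
      using refined_slope_deviation_le[OF \<eta>(2) \<eta>(1) _ K(3) n_pos M \<epsilon>(1) refine[OF M]] K(1) by simp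
    also have "\<theta> / (2 * \<epsilon>) = \<epsilon> / 2" using \<epsilon> by (simp add: \<theta>_def power2_eq_square)
    also have "6 * \<theta> / K \<le> \<epsilon>"
    proof -
      have "6 * \<theta> / K \<le> 6 * \<theta>" using K(1) \<open>\<theta> > 0\<close> by (simp add: divide_le_eq)
      also have "\<dots> \<le> \<epsilon>" using \<epsilon> by (simp add: \<theta>_def power2_eq_square)
      finally show ?thesis .
    qed
    finally show "(\<Sum>j<n * M. \<bar>grid_incr (\<lambda>t. F t - broken_line n s t) (n * M) j\<bar>) \<le> e"
      using \<epsilon> by linarith
  qed
qed

text \<open>Split \<open>F = L + R\<close> with \<open>L\<close> a broken line: the alternating sums of \<open>L\<close> are
  \<open>O(\<delta>)\<close>, and those of \<open>R\<close> are bounded by its variation along fine grids.\<close>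
lemma ac_alternating_sum_small:
  assumes AC: "abs_cont_on {-1..1} F" and e: "e > 0"
  obtains \<delta>\<^sub>0 where "\<delta>\<^sub>0 > 0"
    "\<And>a \<delta> m. 0 \<le> \<delta> \<Longrightarrow> \<delta> \<le> \<delta>\<^sub>0 \<Longrightarrow> -1 \<le> a \<Longrightarrow> a + real m * \<delta> \<le> 1 \<Longrightarrow>
       \<bar>\<Sum>k<m. (-1) ^ k * (F (a + real (Suc k) * \<delta>) - F (a + real k * \<delta>))\<bar> \<le> e"
proof -
  obtain n s where n: "n > 0" and approx:
    "\<And>M. M > 0 \<Longrightarrow> (\<Sum>j<n * M. \<bar>grid_incr (\<lambda>t. F t - broken_line n s t) (n * M) j\<bar>) \<le> e / 2"
    using ac_broken_line_approx[OF AC, of "e / 2"] e by auto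
  define R where "R = (\<lambda>t. F t - broken_line n s t)"
  have R: "uniformly_continuous_on {-1..1} R"
    unfolding R_def
    by (intro uniformly_continuous_on_diff abs_cont_on_imp_uniformly_continuous_on[OF AC]
        broken_line_uniformly_continuous_on)
  define C where "C = (\<Sum>i<n. \<bar>s i\<bar>)"
  have C: "C \<ge> 0" by (simp add: C_def sum_nonneg)
  define \<delta>\<^sub>0 where "\<delta>\<^sub>0 = e / (10 * C + 2)"
  show thesis
  proof (rule that)
    show "\<delta>\<^sub>0 > 0" using e C by (simp add: \<delta>\<^sub>0_def add_nonneg_pos)
  next
    fix a \<delta> :: real and m :: nat
    assume \<delta>: "0 \<le> \<delta>" "\<delta> \<le> \<delta>\<^sub>0" and a: "-1 \<le> a" "a + m * \<delta> \<le> 1"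
    let ?alt = "\<lambda>g. \<Sum>k<m. (-1) ^ k * (g (a + Suc k * \<delta>) - g (a + k * \<delta>) :: real)"
    have "?alt F = ?alt R + ?alt (broken_line n s)"
      by (simp add: R_def sum.distrib[symmetric] algebra_simps)
    moreover have "\<bar>?alt (broken_line n s)\<bar> \<le> e / 2"
    proof -
      have "\<bar>?alt (broken_line n s)\<bar> \<le> 5 * C * \<delta>"
        using alternating_sum_broken_line_le[OF n \<delta>(1), where m=m and s=s and a=a] by (simp add: C_def)
      also have "\<dots> \<le> (5 * C + 1) * \<delta>\<^sub>0"
        using \<delta> C by (intro mult_mono) auto
      also have "\<dots> = e / 2"
      proof -
        have "10 * C + 2 \<noteq> 0" using C by linarith
        then show ?thesis by (simp add: \<delta>\<^sub>0_def field_simps)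
      qed
      finally show ?thesis .
    qed
    moreover have "\<bar>?alt R\<bar> \<le> e / 2"
    proof (cases "\<delta> = 0")
      case False
      have "\<bar>?alt R\<bar> \<le> (\<Sum>k<m. \<bar>R (a + Suc k * \<delta>) - R (a + k * \<delta>)\<bar>)"
        by (rule order_trans[OF sum_abs]) (simp add: abs_mult)
      also have "\<dots> \<le> e / 2"
        using False \<delta>(1) by (intro grid_variation_le_refined[OF R n _ a approx[folded R_def]]) auto
      finally show ?thesis .
    qed (use e in simp)
    ultimately show "\<bar>?alt F\<bar> \<le> e" by linarith
  qed
qed

lemma divided_diff_has_integral:
  assumes der: "\<forall>y\<in>{-1..1}. (f has_real_derivative f' y) (at y within {-1..1})"
    and x: "x \<in> {-1..1}" and t: "t \<in> {-1..1}" "t \<noteq> x"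
  shows "((\<lambda>s. f' (x + s * (t - x))) has_integral divided_diff f x t) {0..1}"
proof -
  define \<psi> where "\<psi> s = x + s * (t - x)" for s
  have \<psi>_in: "\<psi> s \<in> {-1..1}" if "s \<in> {0..1}" for s
  proof -
    have "\<psi> s = (1 - s) * x + s * t" by (simp add: \<psi>_def algebra_simps)
    moreover have "(1 - s) * (-1) + s * (-1) \<le> (1 - s) * x + s * t"
      "(1 - s) * x + s * t \<le> (1 - s) * 1 + s * 1"
      using that x t by (intro add_mono mult_left_mono; simp)+
    ultimately show ?thesis by (simp add: algebra_simps)
  qed
  have "((f \<circ> \<psi>) has_vector_derivative (f' (\<psi> s) * (t - x))) (at s within {0..1})"
    if "s \<in> {0..1}" for s
  proof -
    have "(f has_real_derivative f' (\<psi> s)) (at (\<psi> s) within \<psi> ` {0..1})"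
      using der \<psi>_in[OF that] by (blast intro: DERIV_subset image_subsetI \<psi>_in)
    moreover have "(\<psi> has_real_derivative (t - x)) (at s within {0..1})"
      unfolding \<psi>_def by (auto intro!: derivative_eq_intros)
    ultimately show ?thesis
      by (simp add: DERIV_image_chain has_real_derivative_iff_has_vector_derivative[symmetric])
  qed
  then have "((\<lambda>s. f' (\<psi> s) * (t - x)) has_integral (f (\<psi> 1) - f (\<psi> 0))) {0..1}"
    using fundamental_theorem_of_calculus[of 0 1 "f \<circ> \<psi>"] by simp
  from has_integral_mult_right[OF this, of "1 / (t - x)"]
  show ?thesis using t by (simp add: \<psi>_def divided_diff_def)
qed

text \<open>Each divided difference is an average of \<open>f'\<close> over the segment towards \<open>x\<close>; pulling the
  grid back to that segment by the factor \<open>s\<close> turns \<open>divdiff_alt_sum\<close> into an average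
  over \<open>s \<in> [0,1]\<close> of alternating sums of \<open>f'\<close> on grids of step \<open>2s/n\<close>.\<close>
lemma divdiff_alt_sum_small:
  assumes "AC1 f" and e: "e > 0"
  shows "\<exists>N. \<forall>n\<ge>N. \<forall>x. -1 < x \<longrightarrow> x < 1 \<longrightarrow> (\<forall>k\<le>n. x \<noteq> node n k) \<longrightarrow>
     \<bar>divdiff_alt_sum f n x\<bar> \<le> e"
proof -
  obtain f' where der: "\<forall>y\<in>{-1..1}. (f has_real_derivative f' y) (at y within {-1..1})"
    and ac: "abs_cont_on {-1..1} f'" using assms unfolding AC1_def by blast
  obtain \<delta>\<^sub>0 where \<delta>\<^sub>0: "\<delta>\<^sub>0 > 0" and alt_small:
    "\<And>a \<delta> m. 0 \<le> \<delta> \<Longrightarrow> \<delta> \<le> \<delta>\<^sub>0 \<Longrightarrow> -1 \<le> a \<Longrightarrow> a + real m * \<delta> \<le> 1 \<Longrightarrow>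
       \<bar>\<Sum>k<m. (-1) ^ k * (f' (a + real (Suc k) * \<delta>) - f' (a + real k * \<delta>))\<bar> \<le> e"
    using ac_alternating_sum_small[OF ac e] by blast
  show ?thesis
  proof (intro exI[of _ "nat \<lceil>2 / \<delta>\<^sub>0\<rceil> + 1"] allI impI)
    fix n x assume n: "n \<ge> nat \<lceil>2 / \<delta>\<^sub>0\<rceil> + 1" and x: "-1 < x" "x < 1"
      and not_node: "\<forall>k\<le>n. x \<noteq> node n k"
    have n_pos: "n > 0" and step: "2 / real n \<le> \<delta>\<^sub>0"
      using grid_step_less[OF \<delta>\<^sub>0, of n] n by auto
    define I where "I s = (\<Sum>k<n. (-1) ^ k * (f' (x + s * (node n (Suc k) - x)) - f' (x + s * (node n k - x))))"
      for s
    have int: "(I has_integral divdiff_alt_sum f n x) {0..1}"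
      unfolding I_def divdiff_alt_sum_def
    proof (intro has_integral_sum has_integral_mult_right has_integral_diff)
      fix k assume "k \<in> {..<n}"
      then have k: "Suc k \<le> n" "k \<le> n" by auto
      then have "node n (Suc k) \<noteq> x" "node n k \<noteq> x"
        using not_node[rule_format, of "Suc k"] not_node[rule_format, of k] by auto
      then show "((\<lambda>s. f' (x + s * (node n (Suc k) - x))) has_integral divided_diff f x (node n (Suc k))) {0..1}"
        and "((\<lambda>s. f' (x + s * (node n k - x))) has_integral divided_diff f x (node n k)) {0..1}"
        using divided_diff_has_integral[OF der, of x "node n (Suc k)"] divided_diff_has_integral[OF der, of x "node n k"]
          node_bounds[OF n_pos k(1)] node_bounds[OF n_pos k(2)] x by auto
    qed simp
    have bnd: "norm (I s) \<le> e" if s: "s \<in> {0..1}" for s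
    proof -
      define a where "a = x - s * (1 + x)"
      define \<delta> where "\<delta> = 2 * s / real n"
      have "x + s * (node n k - x) = a + real k * \<delta>" for k
        using n_pos by (simp add: a_def \<delta>_def node_def field_simps)
      then have "I s = (\<Sum>k<n. (-1) ^ k * (f' (a + real (Suc k) * \<delta>) - f' (a + real k * \<delta>)))"
        unfolding I_def by presburger
      moreover have "0 \<le> \<delta>" "\<delta> \<le> 2 / real n"
        using s by (simp_all add: \<delta>_def divide_right_mono)
      moreover have "-1 \<le> a" "a + real n * \<delta> \<le> 1"
        using s x n_pos mult_left_mono[of x 1 "1 - s"] mult_left_mono[of "-1" x "1 - s"]
        by (auto simp: a_def \<delta>_def algebra_simps)
      ultimately show ?thesis using alt_small step by simp
    qed
    show "\<bar>divdiff_alt_sum f n x\<bar> \<le> e"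
      using has_integral_bound_real[OF _ _ int, where B=e and S="{}"] bnd e by simp
  qed
qed

lemma supnorm_nonneg:
  assumes "n > 0" shows "0 \<le> supnorm n g"
proof -
  define x0 where "x0 = -1 + 1 / real n"
  have "x0 \<noteq> node n k" for k
  proof
    assume "x0 = node n k"
    then have "1 = 2 * real k" using assms by (simp add: x0_def node_def field_simps)
    then have "(1::nat) = 2 * k" by linarith
    then show False by presburger
  qed
  moreover have "-1 < x0" "x0 < 1" using assms by (auto simp: x0_def field_simps)
  ultimately have "ereal \<bar>g x0\<bar> \<le> supnorm n g"
    unfolding supnorm_def by (intro SUP_upper) auto
  then show ?thesis by (rule order_trans[rotated]) simp
qed

lemma supnorm_le:
  assumes "\<And>x. -1 < x \<Longrightarrow> x < 1 \<Longrightarrow> (\<forall>k\<le>n. x \<noteq> node n k) \<Longrightarrow> \<bar>g x\<bar> \<le> B"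
  shows "supnorm n g \<le> ereal B"
  unfolding supnorm_def by (rule SUP_least) (use assms in auto)

lemma scaled_supnorm_tendsto_0:
  assumes pos: "\<forall>\<^sub>F j in sequentially. n j > 0"
    and small: "\<And>e. e > 0 \<Longrightarrow> \<forall>\<^sub>F j in sequentially. \<forall>x. -1 < x \<longrightarrow> x < 1 \<longrightarrow>
       (\<forall>k\<le>n j. x \<noteq> node (n j) k) \<longrightarrow> real (n j) * \<bar>g j x\<bar> \<le> e"
  shows "(\<lambda>j. ereal (real (n j)) * supnorm (n j) (g j)) \<longlonglongrightarrow> 0"
proof (rule order_tendstoI)
  fix a :: ereal
  assume "a < 0"
  show "\<forall>\<^sub>F j in sequentially. a < ereal (real (n j)) * supnorm (n j) (g j)"
    using pos
  proof eventually_elim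
    case (elim j)
    have "ereal (real (n j)) * 0 \<le> ereal (real (n j)) * supnorm (n j) (g j)"
      by (rule ereal_mult_left_mono[OF supnorm_nonneg[OF elim]]) simp
    then show ?case using \<open>a < 0\<close> by simp
  qed
next
  fix a :: ereal
  assume "0 < a"
  then obtain z where z: "0 < z" "ereal z < a" using ereal_dense2 by (metis ereal_less(2))
  from z(1) have "\<forall>\<^sub>F j in sequentially. \<forall>x. -1 < x \<longrightarrow> x < 1 \<longrightarrow>
       (\<forall>k\<le>n j. x \<noteq> node (n j) k) \<longrightarrow> real (n j) * \<bar>g j x\<bar> \<le> z / 2"
    by (intro small) simp
  with pos show "\<forall>\<^sub>F j in sequentially. ereal (real (n j)) * supnorm (n j) (g j) < a"
  proof eventually_elim
    case (elim j)
    have "supnorm (n j) (g j) \<le> ereal (z / 2 / real (n j))"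
      using elim by (intro supnorm_le) (simp add: field_simps)
    then have "ereal (real (n j)) * supnorm (n j) (g j) \<le> ereal (real (n j)) * ereal (z / 2 / real (n j))"
      by (rule ereal_mult_left_mono) simp
    also have "\<dots> = ereal (z / 2)" using elim by simp
    also have "\<dots> < ereal z" using z(1) by simp
    also have "\<dots> < a" by (rule z(2))
    finally show ?case .
  qed
qed

lemma Bn_error_tendsto_0:
  assumes AC: "AC1 f" and nj: "strict_mono nj"
    and G: "\<forall>j. (odd (nj j) \<and> G = Ofun f) \<or> (even (nj j) \<and> G = Efun f)"
  shows "(\<lambda>j. ereal (real (nj j)) * supnorm (nj j) (\<lambda>x. Bn (nj j) f x - f x - G x / Dn (nj j) x))
           \<longlonglongrightarrow> 0"
proof (rule scaled_supnorm_tendsto_0)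
  have "j \<le> nj j" for j using seq_suble[OF nj] .
  then have nj_ge: "\<forall>\<^sub>F j in sequentially. N \<le> nj j" for N
    by (intro eventually_sequentiallyI[of N]) (meson le_trans)
  show "\<forall>\<^sub>F j in sequentially. nj j > 0"
    using nj_ge[of 1] by eventually_elim simp
  fix e :: real assume "e > 0"
  then obtain N where N: "\<And>n x. n \<ge> N \<Longrightarrow> -1 < x \<Longrightarrow> x < 1 \<Longrightarrow> (\<forall>k\<le>n. x \<noteq> node n k) \<Longrightarrow>
      \<bar>divdiff_alt_sum f n x\<bar> \<le> e"
    using divdiff_alt_sum_small[OF AC] by blast
  show "\<forall>\<^sub>F j in sequentially. \<forall>x. -1 < x \<longrightarrow> x < 1 \<longrightarrow> (\<forall>k\<le>nj j. x \<noteq> node (nj j) k) \<longrightarrow>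
      real (nj j) * \<bar>Bn (nj j) f x - f x - G x / Dn (nj j) x\<bar> \<le> e"
    using nj_ge[of "max 1 N"]
  proof eventually_elim
    case (elim j)
    show ?case
    proof (intro allI impI)
      fix x assume x: "-1 < x" "x < 1" "\<forall>k\<le>nj j. x \<noteq> node (nj j) k"
      have "(odd (nj j) \<and> G x = Ofun f x) \<or> (even (nj j) \<and> G x = Efun f x)"
        using G by auto
      then have "real (nj j) * \<bar>Bn (nj j) f x - f x - G x / Dn (nj j) x\<bar> \<le> \<bar>divdiff_alt_sum f (nj j) x\<bar>"
        using elim x by (intro Bn_error_le) auto
      also have "\<dots> \<le> e" using elim x by (intro N) auto
      finally show "real (nj j) * \<bar>Bn (nj j) f x - f x - G x / Dn (nj j) x\<bar> \<le> e" .
    qed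
  qed
qed

theorem theorem2:
  fixes f :: "real \<Rightarrow> real" and nj :: "nat \<Rightarrow> nat"
  assumes "AC1 f" and "strict_mono nj"
  shows "((\<forall>j. odd (nj j)) \<longrightarrow>
           (\<lambda>j. ereal (real (nj j)) *
              supnorm (nj j) (\<lambda>x. Bn (nj j) f x - f x - Ofun f x / Dn (nj j) x))
           \<longlonglongrightarrow> 0)
       \<and> ((\<forall>j. even (nj j)) \<longrightarrow>
           (\<lambda>j. ereal (real (nj j)) *
              supnorm (nj j) (\<lambda>x. Bn (nj j) f x - f x - Efun f x / Dn (nj j) x))
           \<longlonglongrightarrow> 0)"
  using Bn_error_tendsto_0[OF assms, of "Ofun f"] Bn_error_tendsto_0[OF assms, of "Efun f"]
  by blast

end
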